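(* Let $\phi:[0,\infty)\to\mathbb{R}$ and let $y_0\ge 0$ be a constant such that $\phi$ is square-integrable on $[0,y_0]$. Let $(\lambda_n)_{n\in\mathbb{N}}$ be a non-decreasing sequence of positive real numbers tending to infinity, let $(r_n)_{n\in\mathbb{N}}$ be a sequence of complex numbers, let $c\in\mathbb{R}$ and $X_0>0$. Assume that for all $y\ge y_0$ and all $X\ge X_0$, $$\phi(y)=c+\Re\Big(\sum_{\lambda_n\le X} r_n e^{i\lambda_n y}\Big)+\mathcal{E}(y,X),$$ where $\mathcal{E}(y,X)$ satisfies $\lim_{Y\to\infty}\frac{1}{Y}\int_{y_0}^{Y}|\mathcal{E}(y,e^Y)|^2\,dy=0.$ Assume either of the following: (a) $r_n\ll\lambda_n^{-\beta}$ for some $\beta>1/2$, and $\sum_{T<\lambda_n\le T+1}1\ll\log T$; (b) $0\le\theta<3-\sqrt3$, $\sum_{T<\lambda_n\le T+1}1\ll\log T$, and $\sum_{\lambda_n\le T}\lambda_n^2|r_n|^2\ll T^{\theta}$. Then $\phi$ is a $B^2$-almost periodic function and therefore possesses a limiting distribution.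
   Context: Notation: $f\ll g$ means there is $M>0$ with $|f|\le M|g|$ for all sufficiently large values of the variable. A real function $\phi$ on $[0,\infty)$ is $B^2$-almost periodic if for every $\epsilon>0$ there is a real-valued trigonometric polynomial $P(y)=\sum_{n=1}^{N}a_n e^{i\mu_n y}$ ($a_n\in\mathbb{C}$, $\mu_n\in\mathbb{R}$) with $\limsup_{Y\to\infty}\frac1Y\int_0^Y|\phi(y)-P(y)|^2dy<\epsilon^2$. A function $\phi:[0,\infty)\to\mathbb{R}$ has a limiting distribution $\mu$ if $\mu$ is a probability measure on $\mathbb{R}$ and $\lim_{Y\to\infty}\frac1Y\int_0^Y f(\phi(y))dy=\int f\,d\mu$ for every bounded continuous $f:\mathbb{R}\to\mathbb{R}$. *)

theory Defs
  imports "HOL-Probability.Probability"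
begin

definition trig_poly :: "nat \<Rightarrow> (nat \<Rightarrow> complex) \<Rightarrow> (nat \<Rightarrow> real) \<Rightarrow> real \<Rightarrow> complex" where
  "trig_poly N a mu y = (\<Sum>n=1..N. a n * exp (\<i> * complex_of_real (mu n * y)))"

definition B2_almost_periodic :: "(real \<Rightarrow> real) \<Rightarrow> bool" where
  "B2_almost_periodic \<phi> \<longleftrightarrow>
     (\<forall>\<epsilon>>0. \<exists>N a mu.
        (\<forall>y. Im (trig_poly N a mu y) = 0) \<and>
        Limsup at_top (\<lambda>Y::real. ennreal (1 / Y) *
           (\<integral>\<^sup>+ y\<in>{0..Y}. ennreal ((cmod (complex_of_real (\<phi> y) - trig_poly N a mu y))^2) \<partial>lborel))
          < ennreal (\<epsilon>^2))"

definition has_limiting_distribution :: "(real \<Rightarrow> real) \<Rightarrow> bool" where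
  "has_limiting_distribution \<phi> \<longleftrightarrow>
     (\<exists>\<mu>. prob_space \<mu> \<and> sets \<mu> = sets borel \<and>
        (\<forall>f :: real \<Rightarrow> real. continuous_on UNIV f \<and> bounded (range f) \<longrightarrow>
           ((\<lambda>Y. (1 / Y) * (LINT y:{0..Y}|lborel. f (\<phi> y))) \<longlongrightarrow> (\<integral>x. f x \<partial>\<mu>)) at_top))"

end

theory Submission
  imports Defs "HOL-Real_Asymp.Real_Asymp"
begin

text \<open>Averaging over shifts gives a mean value inequality
  \<open>\<integral>_0^Y |\<Sum>_{n\<in>F} r_n e^{i \<lambda>_n y}|^2 dy \<le> 8 (Y+1) \<Sum>_m |r_m|^2 \<Sum>_n 1/(1 + (\<lambda>_m - \<lambda>_n)^2)\<close>, and the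
  bound on the number of frequencies in unit windows makes the inner sum \<open>O(log \<lambda>_m)\<close>. Under
  either (a) or (b) a dyadic decomposition shows that \<open>\<Sum> |r_n|^2 log \<lambda>_n\<close> converges, so truncating
  the expansion at a large fixed height leaves a remainder of arbitrarily small mean square:
  \<open>\<phi>\<close> is \<open>B\<^sup>2\<close>-almost periodic.

  For the limiting distribution, the empirical distributions of \<open>\<phi>\<close> on \<open>[0, Y]\<close> are tight, as
  \<open>\<phi>\<close> has bounded mean square. The means of \<open>f \<circ> \<phi>\<close> converge for every bounded continuous
  \<open>f\<close>: approximate \<open>\<phi>\<close> by a trigonometric polynomial \<open>p\<close> and \<open>f\<close> by a polynomial \<open>h\<close>; then
  \<open>h \<circ> p\<close> is a trigonometric polynomial, which has a mean. Any weak limit of a subsequence of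
  the empirical distributions therefore is a limiting distribution.\<close>

section \<open>Oscillatory integrals and exponential sums\<close>

definition cis_integral :: "real \<Rightarrow> real \<Rightarrow> real \<Rightarrow> complex" where
  "cis_integral d a b = (if d = 0 then complex_of_real (b - a)
     else (exp (\<i> * complex_of_real (d*b)) - exp (\<i> * complex_of_real (d*a))) / (\<i> * complex_of_real d))"

lemma norm_exp_i_times: "cmod (exp (\<i> * complex_of_real x)) = 1"
  by (simp add: norm_exp_eq_Re)

lemma has_integral_cis_integral:
  assumes "a \<le> b"
  shows "((\<lambda>y. exp (\<i> * complex_of_real (d*y))) has_integral cis_integral d a b) {a..b}"
proof (cases "d = 0")
  case True
  then show ?thesis using has_integral_const_real[of "1::complex" a b] assms
    by (simp add: cis_integral_def scaleR_conv_of_real)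
next
  case False
  have "((\<lambda>y. exp (\<i> * complex_of_real (d*y))) has_integral
        (exp (\<i> * complex_of_real (d*b)) / (\<i> * complex_of_real d) -
         exp (\<i> * complex_of_real (d*a)) / (\<i> * complex_of_real d))) {a..b}"
  proof (rule fundamental_theorem_of_calculus[OF assms])
    fix x assume "x \<in> {a..b}"
    have "((\<lambda>z. exp (\<i> * complex_of_real d * z) / (\<i> * complex_of_real d)) has_field_derivative
            exp (\<i> * complex_of_real d * complex_of_real x)) (at (complex_of_real x))"
      using False by (auto intro!: derivative_eq_intros)
    then have "((\<lambda>y. exp (\<i> * complex_of_real d * complex_of_real y) / (\<i> * complex_of_real d))
        has_vector_derivative exp (\<i> * complex_of_real d * complex_of_real x)) (at x within {a..b})"
      by (intro has_vector_derivative_real_field)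
    then show "((\<lambda>y. exp (\<i> * complex_of_real (d*y)) / (\<i> * complex_of_real d)) has_vector_derivative
            exp (\<i> * complex_of_real (d*x))) (at x within {a..b})"
      by (simp add: mult.assoc)
  qed
  then show ?thesis using False by (simp add: cis_integral_def diff_divide_distrib)
qed

lemma cis_integral_shift:
  "cis_integral d (-t) (b - t) = exp (- (\<i> * complex_of_real (d*t))) * cis_integral d 0 b"
proof (cases "d = 0")
  case False
  have "exp (\<i> * complex_of_real (d*(b-t))) =
      exp (- (\<i> * complex_of_real (d*t))) * exp (\<i> * complex_of_real (d*b))"
    by (simp add: exp_add[symmetric] algebra_simps)
  then show ?thesis using False by (simp add: cis_integral_def algebra_simps diff_divide_distrib)
qed (simp add: cis_integral_def)

lemma norm_cis_integral_le_length:
  assumes "0 \<le> b" shows "cmod (cis_integral d 0 b) \<le> b"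
  using has_integral_bound[where f="\<lambda>y. exp (\<i> * complex_of_real (d*y))", of 1 _ 0 b]
    has_integral_cis_integral[of 0 b d] assms
  by (simp add: norm_exp_i_times)

lemma norm_cis_integral_le_freq:
  assumes "d \<noteq> 0" shows "cmod (cis_integral d a b) \<le> 2 / \<bar>d\<bar>"
proof -
  have "cmod (exp (\<i> * complex_of_real (d*b)) - exp (\<i> * complex_of_real (d*a))) \<le> 2"
    using norm_triangle_ineq4[of "exp (\<i> * complex_of_real (d*b))" "exp (\<i> * complex_of_real (d*a))"]
    by (simp add: norm_exp_i_times)
  then show ?thesis using assms
    by (simp add: cis_integral_def norm_divide norm_mult divide_right_mono)
qed

lemma norm_cis_integral_mult_le:
  assumes "0 \<le> Y"
  shows "cmod (cis_integral d 0 (Y+1) * cis_integral (-d) 0 1) \<le> 8*(Y+1)/(1+d^2)"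
proof (cases "d^2 \<le> 1")
  case True
  have "cmod (cis_integral d 0 (Y+1) * cis_integral (-d) 0 1) \<le> (Y+1) * 1"
    unfolding norm_mult by (rule mult_mono) (use norm_cis_integral_le_length assms in auto)
  also have "\<dots> \<le> 8*(Y+1)/(1+d^2)"
  proof -
    have "(Y+1)*(1+d^2) \<le> (Y+1)*8" using True assms by (intro mult_left_mono) auto
    then show ?thesis by (simp add: field_simps add_pos_nonneg)
  qed
  finally show ?thesis .
next
  case False
  then have d: "d \<noteq> 0" by auto
  have "cmod (cis_integral d 0 (Y+1) * cis_integral (-d) 0 1) \<le> (2/\<bar>d\<bar>) * (2/\<bar>d\<bar>)"
    unfolding norm_mult
    by (rule mult_mono) (use norm_cis_integral_le_freq[of d] norm_cis_integral_le_freq[of "-d"] d in auto)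
  also have "\<dots> = 4 / d^2" by (simp add: power2_eq_square)
  also have "\<dots> \<le> 8/(1+d^2)" using False by (simp add: divide_simps)
  also have "\<dots> \<le> 8*(Y+1)/(1+d^2)" using assms by (simp add: field_simps add_pos_nonneg)
  finally show ?thesis .
qed

lemma cis_integral_mean:
  "((\<lambda>Y. complex_of_real (1/Y) * cis_integral \<mu> 0 Y) \<longlongrightarrow> (if \<mu> = 0 then 1 else 0)) at_top"
proof (cases "\<mu> = 0")
  case True
  have "\<forall>\<^sub>F Y in at_top. complex_of_real (1/Y) * cis_integral \<mu> 0 Y = 1"
    using eventually_gt_at_top[of "0::real"]
    by eventually_elim (simp add: True cis_integral_def of_real_mult[symmetric] del: of_real_mult)
  then show ?thesis using True by (simp add: tendsto_eventually)
next
  case False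
  have "((\<lambda>Y. complex_of_real (1/Y) * cis_integral \<mu> 0 Y) \<longlongrightarrow> 0) at_top"
  proof (rule Lim_null_comparison)
    show "\<forall>\<^sub>F Y in at_top. norm (complex_of_real (1/Y) * cis_integral \<mu> 0 Y) \<le> (1/Y) * (2/\<bar>\<mu>\<bar>)"
      using eventually_gt_at_top[of "0::real"]
    proof eventually_elim
      case (elim Y)
      have "norm (complex_of_real (1/Y) * cis_integral \<mu> 0 Y) = (1/Y) * cmod (cis_integral \<mu> 0 Y)"
        using elim by (simp add: norm_mult norm_divide)
      also have "\<dots> \<le> (1/Y) * (2/\<bar>\<mu>\<bar>)"
        using norm_cis_integral_le_freq[OF False, of 0 Y] elim by (intro mult_left_mono) auto
      finally show ?case .
    qed
    show "((\<lambda>Y. (1/Y) * (2/\<bar>\<mu>\<bar>)) \<longlongrightarrow> 0) at_top" by real_asymp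
  qed
  then show ?thesis using False by simp
qed

definition exp_sum :: "nat set \<Rightarrow> (nat \<Rightarrow> complex) \<Rightarrow> (nat \<Rightarrow> real) \<Rightarrow> real \<Rightarrow> complex" where
  "exp_sum F r lam y = (\<Sum>n\<in>F. r n * exp (\<i> * complex_of_real (lam n * y)))"

lemma continuous_on_exp_sum [continuous_intros]: "continuous_on A (exp_sum F r lam)"
  unfolding exp_sum_def by (intro continuous_intros)

lemma borel_measurable_exp_sum [measurable]: "exp_sum F r lam \<in> borel_measurable borel"
  by (intro borel_measurable_continuous_onI continuous_on_exp_sum)

lemma exp_sum_union:
  "finite A \<Longrightarrow> finite B \<Longrightarrow> A \<inter> B = {} \<Longrightarrow> exp_sum (A \<union> B) r lam y = exp_sum A r lam y + exp_sum B r lam y"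
  unfolding exp_sum_def by (rule sum.union_disjoint)

lemma norm_exp_sum_square:
  "complex_of_real ((cmod (exp_sum F r lam y))^2) =
     (\<Sum>m\<in>F. \<Sum>n\<in>F. r m * cnj (r n) * exp (\<i> * complex_of_real ((lam m - lam n) * y)))"
proof -
  have "complex_of_real ((cmod (exp_sum F r lam y))^2) = exp_sum F r lam y * cnj (exp_sum F r lam y)"
    by (rule complex_norm_square)
  also have "cnj (exp_sum F r lam y) = (\<Sum>n\<in>F. cnj (r n) * exp (- (\<i> * complex_of_real (lam n * y))))"
    by (simp add: exp_sum_def exp_cnj)
  also have "exp_sum F r lam y * \<dots> = (\<Sum>m\<in>F. \<Sum>n\<in>F. (r m * exp (\<i> * complex_of_real (lam m * y))) *
        (cnj (r n) * exp (- (\<i> * complex_of_real (lam n * y)))))"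
    unfolding exp_sum_def by (rule sum_product)
  also have "\<dots> = (\<Sum>m\<in>F. \<Sum>n\<in>F. r m * cnj (r n) * exp (\<i> * complex_of_real ((lam m - lam n) * y)))"
    by (intro sum.cong refl) (simp add: exp_add[symmetric] algebra_simps flip: exp_diff)
  finally show ?thesis .
qed

lemma has_integral_norm_exp_sum_square:
  assumes "finite F" "a \<le> b"
  shows "((\<lambda>y. (cmod (exp_sum F r lam y))^2) has_integral
     Re (\<Sum>m\<in>F. \<Sum>n\<in>F. r m * cnj (r n) * cis_integral (lam m - lam n) a b)) {a..b}"
proof -
  have "((\<lambda>y. complex_of_real ((cmod (exp_sum F r lam y))^2)) has_integral
     (\<Sum>m\<in>F. \<Sum>n\<in>F. r m * cnj (r n) * cis_integral (lam m - lam n) a b)) {a..b}"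
    unfolding norm_exp_sum_square
    by (intro has_integral_sum assms has_integral_mult_right has_integral_cis_integral)
  from has_integral_linear[OF this bounded_linear_Re] show ?thesis by (simp add: o_def)
qed

lemma sum_sum_abs_mult_le:
  fixes w :: "nat \<Rightarrow> nat \<Rightarrow> real" and a :: "nat \<Rightarrow> real"
  assumes "finite F" "\<And>m n. w m n = w n m" "\<And>m n. 0 \<le> w m n"
  shows "(\<Sum>m\<in>F. \<Sum>n\<in>F. \<bar>a m\<bar> * \<bar>a n\<bar> * w m n) \<le> (\<Sum>m\<in>F. (a m)^2 * (\<Sum>n\<in>F. w m n))"
proof -
  have "(\<Sum>m\<in>F. \<Sum>n\<in>F. \<bar>a m\<bar> * \<bar>a n\<bar> * w m n) \<le>
        (\<Sum>m\<in>F. \<Sum>n\<in>F. ((a m)^2/2 + (a n)^2/2) * w m n)"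
  proof (intro sum_mono mult_right_mono assms)
    fix m n
    have "0 \<le> (\<bar>a m\<bar> - \<bar>a n\<bar>)^2" by simp
    then show "\<bar>a m\<bar> * \<bar>a n\<bar> \<le> (a m)^2/2 + (a n)^2/2"
      by (simp add: power2_eq_square algebra_simps)
  qed
  also have "\<dots> = (\<Sum>m\<in>F. \<Sum>n\<in>F. (a m)^2/2 * w m n) + (\<Sum>m\<in>F. \<Sum>n\<in>F. (a n)^2/2 * w m n)"
    by (simp add: distrib_right sum.distrib)
  also have "(\<Sum>m\<in>F. \<Sum>n\<in>F. (a n)^2/2 * w m n) = (\<Sum>m\<in>F. \<Sum>n\<in>F. (a m)^2/2 * w m n)"
    by (subst sum.swap, subst assms(2), rule refl)
  also have "(\<Sum>m\<in>F. \<Sum>n\<in>F. (a m)^2/2 * w m n) + (\<Sum>m\<in>F. \<Sum>n\<in>F. (a m)^2/2 * w m n)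
       = (\<Sum>m\<in>F. (a m)^2 * (\<Sum>n\<in>F. w m n))"
    by (simp add: sum_distrib_left sum_distrib_right sum.distrib[symmetric] mult.commute)
  finally show ?thesis .
qed

text \<open>Averaging the integral over the shifted windows \<open>[-t, Y+1-t]\<close>, \<open>t \<in> [0,1]\<close>, replaces each
  oscillatory integral by a product of two, which decays like \<open>1/(1+d^2)\<close> in the frequency
  difference \<open>d\<close>.\<close>

lemma integral_norm_exp_sum_square_le_shift_average:
  assumes F: "finite F" and Y: "0 \<le> Y"
  shows "integral {0..Y} (\<lambda>y. (cmod (exp_sum F r lam y))^2) \<le> cmod (\<Sum>m\<in>F. \<Sum>n\<in>F.
      r m * cnj (r n) * cis_integral (lam m - lam n) 0 (Y+1) * cis_integral (- (lam m - lam n)) 0 1)"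
proof -
  define h where "h y = (cmod (exp_sum F r lam y))^2" for y
  define c where "c m n = r m * cnj (r n)" for m n
  define D where "D m n = lam m - lam n" for m n
  define G where "G t = (\<Sum>m\<in>F. \<Sum>n\<in>F. c m n * cis_integral (D m n) 0 (Y+1) *
      exp (\<i> * complex_of_real (- D m n * t)))" for t
  define V where "V = (\<Sum>m\<in>F. \<Sum>n\<in>F. c m n * cis_integral (D m n) 0 (Y+1) * cis_integral (- D m n) 0 1)"
  have h_integral: "(h has_integral Re (\<Sum>m\<in>F. \<Sum>n\<in>F. c m n * cis_integral (D m n) a b)) {a..b}"
    if "a \<le> b" for a b
    unfolding h_def c_def D_def using has_integral_norm_exp_sum_square[OF F that] .
  have shifted: "integral {0..Y} h \<le> Re (G t)" if t: "t \<in> {0..1}" for t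
  proof -
    have "integral {0..Y} h \<le> integral {-t..(Y+1)-t} h"
      by (rule integral_subset_le)
        (use t Y in \<open>auto intro!: integrable_continuous_interval continuous_intros simp: h_def\<close>)
    also have "\<dots> = Re (\<Sum>m\<in>F. \<Sum>n\<in>F. c m n * cis_integral (D m n) (-t) ((Y+1)-t))"
      using h_integral[of "-t" "(Y+1)-t"] t Y by (simp add: integral_unique)
    also have "\<dots> = Re (G t)"
      unfolding G_def cis_integral_shift by (simp add: mult_ac)
    finally show ?thesis .
  qed
  have "(G has_integral V) {0..1}"
    unfolding G_def V_def by (intro has_integral_sum F has_integral_mult_right has_integral_cis_integral) simp
  then have ReG_integral: "((\<lambda>t. Re (G t)) has_integral Re V) {0..1}"
    using has_integral_linear[OF _ bounded_linear_Re] by (simp add: o_def)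
  have "integral {0..Y} h \<le> Re V"
    using has_integral_le[OF _ ReG_integral, of "\<lambda>_. integral {0..Y} h" "integral {0..Y} h"] shifted
      has_integral_const_real[of "integral {0..Y} h" 0 1] by simp
  also have "\<dots> \<le> cmod V" by (rule complex_Re_le_cmod)
  finally show ?thesis by (simp add: h_def[abs_def] V_def c_def D_def)
qed

lemma integral_norm_exp_sum_square_le:
  assumes F: "finite F" and Y: "0 \<le> Y"
  shows "integral {0..Y} (\<lambda>y. (cmod (exp_sum F r lam y))^2) \<le>
     8*(Y+1) * (\<Sum>m\<in>F. (cmod (r m))^2 * (\<Sum>n\<in>F. 1/(1+(lam m - lam n)^2)))"
proof -
  have "integral {0..Y} (\<lambda>y. (cmod (exp_sum F r lam y))^2) \<le> (\<Sum>m\<in>F. \<Sum>n\<in>F.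
      cmod (r m * cnj (r n) * cis_integral (lam m - lam n) 0 (Y+1) * cis_integral (- (lam m - lam n)) 0 1))"
    using integral_norm_exp_sum_square_le_shift_average[OF F Y]
    by (rule order.trans) (intro order.trans[OF norm_sum sum_mono] norm_sum)
  also have "\<dots> \<le> (\<Sum>m\<in>F. \<Sum>n\<in>F. \<bar>cmod (r m)\<bar> * \<bar>cmod (r n)\<bar> * (8*(Y+1)*(1/(1+(lam m - lam n)^2))))"
  proof (intro sum_mono)
    fix m n
    have "cmod (r m * cnj (r n) * cis_integral (lam m - lam n) 0 (Y+1) * cis_integral (- (lam m - lam n)) 0 1) =
        cmod (r m) * cmod (r n) * cmod (cis_integral (lam m - lam n) 0 (Y+1) * cis_integral (- (lam m - lam n)) 0 1)"
      by (simp add: norm_mult)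
    also have "\<dots> \<le> cmod (r m) * cmod (r n) * (8*(Y+1)/(1+(lam m - lam n)^2))"
      by (intro mult_left_mono norm_cis_integral_mult_le[OF Y]) simp
    finally show "cmod (r m * cnj (r n) * cis_integral (lam m - lam n) 0 (Y+1) * cis_integral (- (lam m - lam n)) 0 1) \<le>
        \<bar>cmod (r m)\<bar> * \<bar>cmod (r n)\<bar> * (8*(Y+1)*(1/(1+(lam m - lam n)^2)))"
      by simp
  qed
  also have "\<dots> \<le> (\<Sum>m\<in>F. (cmod (r m))^2 * (\<Sum>n\<in>F. 8*(Y+1)*(1/(1+(lam m - lam n)^2))))"
    by (rule sum_sum_abs_mult_le[OF F]) (use Y in \<open>auto simp: power2_commute add_pos_nonneg\<close>)
  also have "\<dots> = 8*(Y+1) * (\<Sum>m\<in>F. (cmod (r m))^2 * (\<Sum>n\<in>F. 1/(1+(lam m - lam n)^2)))"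
    by (simp add: sum_distrib_left[symmetric] sum_distrib_left mult_ac)
  finally show ?thesis .
qed

section \<open>Counting frequencies\<close>

lemma finite_sublevel_of_filterlim_at_top:
  assumes "filterlim (lam::nat\<Rightarrow>real) at_top sequentially"
  shows "finite {n. lam n \<le> X}"
proof -
  from assms have "\<forall>\<^sub>F n in sequentially. X + 1 \<le> lam n"
    by (simp add: filterlim_at_top)
  then obtain N where N: "\<And>n. N \<le> n \<Longrightarrow> X + 1 \<le> lam n"
    by (auto simp: eventually_sequentially)
  have "{n. lam n \<le> X} \<subseteq> {..<N}"
    using N by (force simp: not_less[symmetric])
  then show ?thesis by (rule finite_subset) simp
qed

lemma finite_unit_window:
  "filterlim (lam::nat\<Rightarrow>real) at_top sequentially \<Longrightarrow> finite {n. T < lam n \<and> lam n \<le> T + 1}"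
  by (rule finite_subset[OF _ finite_sublevel_of_filterlim_at_top[of lam "T + 1"]]) auto

lemma unit_window_index:
  assumes "0 < x"
  shows "real (nat (\<lceil>x\<rceil> - 1)) < x" "x \<le> real (nat (\<lceil>x\<rceil> - 1)) + 1"
proof -
  have "\<lceil>x\<rceil> \<ge> 1" using assms by (simp add: one_le_ceiling)
  then have e: "real (nat (\<lceil>x\<rceil> - 1)) = real_of_int \<lceil>x\<rceil> - 1" by simp
  show "real (nat (\<lceil>x\<rceil> - 1)) < x" "x \<le> real (nat (\<lceil>x\<rceil> - 1)) + 1"
    unfolding e by linarith+
qed

text \<open>The window count is only assumed to be \<open>O(log T)\<close> for large \<open>T\<close>; the finitely many small
  windows are absorbed into the constant \<open>N0\<close>.\<close>

lemma card_unit_window_le_log: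
  assumes lim: "filterlim (lam::nat\<Rightarrow>real) at_top sequentially"
    and cnt: "\<exists>M>0. \<forall>\<^sub>F T in at_top. real (card {n. T < lam n \<and> lam n \<le> T + 1}) \<le> M * \<bar>ln T\<bar>"
  obtains N0 M where "0 \<le> N0" "0 \<le> M"
    "\<And>j::nat. real (card {n. real j < lam n \<and> lam n \<le> real j + 1}) \<le> N0 + M * ln (real j + 1)"
proof -
  obtain M T0 where M: "M > 0"
    and T0: "\<And>T. T \<ge> T0 \<Longrightarrow> real (card {n. T < lam n \<and> lam n \<le> T + 1}) \<le> M * \<bar>ln T\<bar>"
    using cnt by (auto simp: eventually_at_top_linorder)
  define T1 where "T1 = max T0 1"
  define N0 where "N0 = real (card {n. lam n \<le> T1 + 1})"
  have fin: "finite {n. lam n \<le> T1 + 1}" by (rule finite_sublevel_of_filterlim_at_top[OF lim])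
  have "real (card {n. real j < lam n \<and> lam n \<le> real j + 1}) \<le> N0 + M * ln (real j + 1)" for j :: nat
  proof (cases "real j \<ge> T1")
    case True
    then have j: "real j \<ge> 1" "real j \<ge> T0" by (auto simp: T1_def)
    have "real (card {n. real j < lam n \<and> lam n \<le> real j + 1}) \<le> M * \<bar>ln (real j)\<bar>"
      using T0[OF j(2)] .
    also have "\<dots> \<le> M * ln (real j + 1)"
      using j M by (intro mult_left_mono) auto
    finally show ?thesis by (simp add: N0_def)
  next
    case False
    then have "card {n. real j < lam n \<and> lam n \<le> real j + 1} \<le> card {n. lam n \<le> T1 + 1}"
      by (intro card_mono[OF fin]) auto
    moreover have "0 \<le> M * ln (real j + 1)" using M by simp
    ultimately show ?thesis by (simp add: N0_def)
  qed
  then show ?thesis using that[of N0 M] M by (simp add: N0_def)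
qed

lemma summable_shifted_powr_three_halves: "summable (\<lambda>k::nat. (1 + real k) powr (-3/2))"
proof -
  have "summable (\<lambda>n::nat. real n powr (-3/2))" by (simp add: summable_real_powr_iff)
  then show ?thesis
    using summable_Suc_iff[of "\<lambda>n::nat. real n powr (-3/2)"] by (simp add: add.commute)
qed

lemma sum_powr_distance_le:
  fixes J :: "nat set"
  assumes "finite J" "0 < x"
  shows "(\<Sum>j\<in>J. (1 + \<bar>real j - x\<bar>) powr (-3/2)) \<le> 2 * (\<Sum>k. (1 + real k) powr (-3/2))"
proof -
  define h :: "real \<Rightarrow> real" where "h t = (1 + t) powr (-3/2)" for t
  have h_antimono: "h t \<le> h s" if "0 \<le> s" "s \<le> t" for s t
    unfolding h_def using that by (intro powr_mono2') auto
  have h_le_suminf: "(\<Sum>k\<in>K. h (real k)) \<le> (\<Sum>k. h (real k))" if "finite K" for K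
    by (rule sum_le_suminf) (use that summable_shifted_powr_three_halves in \<open>auto simp: h_def\<close>)
  define J1 where "J1 = {j\<in>J. x \<le> real j}"
  define J2 where "J2 = {j\<in>J. real j < x}"
  have fin: "finite J1" "finite J2" using assms by (auto simp: J1_def J2_def)
  have split: "(\<Sum>j\<in>J. h \<bar>real j - x\<bar>) = (\<Sum>j\<in>J1. h \<bar>real j - x\<bar>) + (\<Sum>j\<in>J2. h \<bar>real j - x\<bar>)"
  proof -
    have "J = J1 \<union> J2" "J1 \<inter> J2 = {}" by (auto simp: J1_def J2_def)
    then show ?thesis using fin by (simp add: sum.union_disjoint)
  qed
  define c where "c = nat \<lceil>x\<rceil>"
  define f where "f = nat \<lfloor>x\<rfloor>"
  have ge_c: "c \<le> j" if "j \<in> J1" for j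
    using that assms(2) unfolding J1_def c_def by (auto simp: nat_le_iff ceiling_le_iff)
  have "(\<Sum>j\<in>J1. h \<bar>real j - x\<bar>) \<le> (\<Sum>j\<in>J1. h (real (j - c)))"
  proof (intro sum_mono h_antimono)
    fix j assume j: "j \<in> J1"
    have "real c \<ge> x" unfolding c_def using assms(2) by linarith
    then show "real (j - c) \<le> \<bar>real j - x\<bar>" using ge_c[OF j] j by (auto simp: J1_def of_nat_diff)
  qed simp
  also have "\<dots> = (\<Sum>k\<in>(\<lambda>j. j - c) ` J1. h (real k))"
    by (rule sum.reindex[symmetric, unfolded o_def]) (rule inj_onI, metis ge_c le_add_diff_inverse2)
  also have "\<dots> \<le> (\<Sum>k. h (real k))" using fin by (intro h_le_suminf) auto
  finally have s1: "(\<Sum>j\<in>J1. h \<bar>real j - x\<bar>) \<le> (\<Sum>k. h (real k))" .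
  have le_f: "j \<le> f" if "j \<in> J2" for j
    using that assms(2) unfolding J2_def f_def by (auto simp: le_nat_iff le_floor_iff)
  have "(\<Sum>j\<in>J2. h \<bar>real j - x\<bar>) \<le> (\<Sum>j\<in>J2. h (real (f - j)))"
  proof (intro sum_mono h_antimono)
    fix j assume j: "j \<in> J2"
    have "real f \<le> x" unfolding f_def using assms(2) by linarith
    then show "real (f - j) \<le> \<bar>real j - x\<bar>" using le_f[OF j] j by (auto simp: J2_def of_nat_diff)
  qed simp
  also have "\<dots> = (\<Sum>k\<in>(\<lambda>j. f - j) ` J2. h (real k))"
    by (rule sum.reindex[symmetric, unfolded o_def]) (rule inj_onI, metis le_f diff_diff_cancel)
  also have "\<dots> \<le> (\<Sum>k. h (real k))" using fin by (intro h_le_suminf) auto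
  finally show ?thesis using split s1 unfolding h_def by simp
qed

lemma one_plus_ln_over_square_le:
  fixes t :: real
  assumes t: "0 \<le> t"
  shows "(1 + ln (1+t)) / (1+t^2) \<le> 6 * (1+t) powr (-3/2)"
proof -
  define u where "u = 1+t"
  have u: "1 \<le> u" using t unfolding u_def by linarith
  have su: "1 \<le> sqrt u" using u by simp
  have "ln u = 2 * ln (sqrt u)" using u by (simp add: ln_sqrt)
  also have "\<dots> \<le> 2 * (sqrt u - 1)" using ln_le_minus_one[of "sqrt u"] su by simp
  finally have l: "1 + ln u \<le> 3 * sqrt u" using su by (smt (verit))
  have q: "u^2 \<le> 2*(1+t^2)" unfolding u_def
    using sum_squares_ge_zero[of "t-1" 0] by (simp add: power2_eq_square algebra_simps)
  have "(1 + ln u) / (1+t^2) \<le> (3 * sqrt u) / (u^2/2)"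
    by (rule frac_le) (use l q u su in \<open>auto simp: add_pos_nonneg\<close>)
  also have "\<dots> = 6 * inverse (u * sqrt u)"
    using u by (simp add: power2_eq_square field_simps)
  also have "u * sqrt u = u powr (1 + 1/2)"
    using u by (simp only: powr_add powr_half_sqrt powr_one_gt_zero_iff) simp
  also have "6 * inverse (u powr (1 + 1/2)) = 6 * u powr (-3/2)" by (simp add: powr_minus)
  finally show ?thesis using t by (simp add: u_def)
qed

lemma inverse_one_plus_square_shift_le:
  fixes x a b :: real
  assumes "\<bar>a - b\<bar> \<le> 1"
  shows "1/(1+(x - a)^2) \<le> 3/(1+(x - b)^2)"
proof -
  have "(x - b)^2 \<le> 2*(x - a)^2 + 2*(a - b)^2"
    using sum_squares_ge_zero[of "x - a - (a - b)" 0] by (simp add: power2_eq_square algebra_simps)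
  moreover have "(a - b)^2 \<le> 1" using assms by (simp add: abs_square_le_1)
  moreover have "0 \<le> (x - a)^2" by simp
  ultimately have "1 + (x - b)^2 \<le> 3 * (1 + (x - a)^2)" by (smt (verit))
  then show ?thesis by (simp add: field_simps add_pos_nonneg)
qed

lemma log_count_kernel_le:
  fixes x :: real and j :: nat
  assumes x: "0 < x" and N0: "0 \<le> N0" and M: "0 \<le> M"
  shows "(N0 + M * ln (real j + 1)) * (3/(1+(x - real j)^2)) \<le>
    18*(N0+M)*(1+ln(1+x)) * (1 + \<bar>real j - x\<bar>) powr (-3/2)"
proof -
  define t where "t = \<bar>real j - x\<bar>"
  define L where "L = ln (1+x)"
  have t0: "0 \<le> t" and L0: "0 \<le> L" using x by (auto simp: t_def L_def)
  have "real j + 1 \<le> (1+x)*(1+t)"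
    using x t0 by (simp add: t_def algebra_simps) (smt (verit) mult_nonneg_nonneg)
  then have "ln (real j + 1) \<le> ln ((1+x)*(1+t))" by simp
  also have "\<dots> = L + ln (1+t)" using x t0 by (simp add: L_def ln_mult)
  finally have "N0 + M * ln (real j + 1) \<le> N0 + M * (L + ln (1+t))"
    using M by (simp add: mult_left_mono)
  also have "\<dots> \<le> (N0 + M)*(1+L)*(1 + ln (1+t))"
    using N0 M L0 t0 by (simp add: algebra_simps add_nonneg_nonneg mult_nonneg_nonneg add_increasing)
  finally have num: "N0 + M * ln (real j + 1) \<le> (N0 + M)*(1+L)*(1 + ln (1+t))" .
  have sq: "(x - real j)^2 = t^2" unfolding t_def power2_abs by (rule power2_commute)
  have "(N0 + M * ln (real j + 1)) * (3/(1+(x - real j)^2)) \<le>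
      (N0 + M)*(1+L)*(1 + ln (1+t)) * (3/(1+t^2))"
    unfolding sq using num by (intro mult_right_mono) (simp_all add: add_pos_nonneg)
  also have "\<dots> = 3*(N0 + M)*(1+L) * ((1 + ln (1+t)) / (1+t^2))" by (simp add: field_simps)
  also have "\<dots> \<le> 3*(N0 + M)*(1+L) * (6 * (1+t) powr (-3/2))"
    by (intro mult_left_mono one_plus_ln_over_square_le t0) (use N0 M L0 in simp)
  also have "\<dots> = 18*(N0+M)*(1+ln(1+x)) * (1 + \<bar>real j - x\<bar>) powr (-3/2)"
    by (simp add: t_def L_def)
  finally show ?thesis .
qed

text \<open>Grouping the frequencies into unit windows \<open>(j, j+1]\<close>, each of which contributes
  \<open>O(log j / (1 + (x - j)^2))\<close>.\<close>

lemma sum_frequency_kernel_le_log: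
  assumes pos: "\<And>n. lam n > (0::real)"
    and lim: "filterlim lam at_top sequentially"
    and cnt: "\<exists>M>0. \<forall>\<^sub>F T in at_top. real (card {n. T < lam n \<and> lam n \<le> T + 1}) \<le> M * \<bar>ln T\<bar>"
  obtains D where "0 \<le> D" "\<And>x F. 0 < x \<Longrightarrow> finite F \<Longrightarrow> (\<Sum>n\<in>F. 1/(1+(x - lam n)^2)) \<le> D*(1+ln(1+x))"
proof -
  obtain N0 M where N0: "0 \<le> N0" and M: "0 \<le> M"
    and cu: "\<And>j::nat. real (card {n. real j < lam n \<and> lam n \<le> real j + 1}) \<le> N0 + M * ln (real j + 1)"
    using card_unit_window_le_log[OF lim cnt] by blast
  define jn where "jn n = nat (\<lceil>lam n\<rceil> - 1)" for n
  have jn: "real (jn n) < lam n" "lam n \<le> real (jn n) + 1" for n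
    unfolding jn_def using unit_window_index[OF pos] by auto
  define S where "S = (\<Sum>k. (1 + real k) powr (-3/2))"
  have S0: "0 \<le> S" unfolding S_def by (intro suminf_nonneg summable_shifted_powr_three_halves) simp
  have "(\<Sum>n\<in>F. 1/(1+(x - lam n)^2)) \<le> (36*(N0+M)*S) * (1+ln(1+x))" if x: "0 < x" and F: "finite F" for x F
  proof -
    define K where "K = 18*(N0+M)*(1+ln(1+x))"
    have "(\<Sum>n\<in>F. 1/(1+(x - lam n)^2)) = (\<Sum>j\<in>jn ` F. \<Sum>n\<in>{n\<in>F. jn n = j}. 1/(1+(x - lam n)^2))"
      by (rule sum.image_gen[OF F])
    also have "\<dots> \<le> (\<Sum>j\<in>jn ` F. K * (1 + \<bar>real j - x\<bar>) powr (-3/2))"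
    proof (rule sum_mono)
      fix j assume "j \<in> jn ` F"
      have "(\<Sum>n\<in>{n\<in>F. jn n = j}. 1/(1+(x - lam n)^2)) \<le> (\<Sum>n\<in>{n\<in>F. jn n = j}. 3/(1+(x - real j)^2))"
      proof (intro sum_mono inverse_one_plus_square_shift_le)
        fix n assume "n \<in> {n\<in>F. jn n = j}"
        then show "\<bar>lam n - real j\<bar> \<le> 1" using jn[of n] by auto
      qed
      also have "\<dots> = real (card {n\<in>F. jn n = j}) * (3/(1+(x - real j)^2))" by simp
      also have "\<dots> \<le> (N0 + M * ln (real j + 1)) * (3/(1+(x - real j)^2))"
      proof (rule mult_right_mono)
        have "card {n\<in>F. jn n = j} \<le> card {n. real j < lam n \<and> lam n \<le> real j + 1}"
          using jn by (intro card_mono finite_unit_window[OF lim]) auto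
        then show "real (card {n\<in>F. jn n = j}) \<le> N0 + M * ln (real j + 1)"
          using cu[of j] by linarith
      qed (simp add: add_pos_nonneg)
      also have "\<dots> \<le> K * (1 + \<bar>real j - x\<bar>) powr (-3/2)"
        unfolding K_def by (rule log_count_kernel_le[OF x N0 M])
      finally show "(\<Sum>n\<in>{n\<in>F. jn n = j}. 1/(1+(x - lam n)^2)) \<le> K * (1 + \<bar>real j - x\<bar>) powr (-3/2)" .
    qed
    also have "\<dots> = K * (\<Sum>j\<in>jn ` F. (1 + \<bar>real j - x\<bar>) powr (-3/2))"
      by (simp add: sum_distrib_left)
    also have "\<dots> \<le> K * (2*S)"
      unfolding S_def using F x N0 M by (intro mult_left_mono sum_powr_distance_le) (auto simp: K_def)
    finally show ?thesis by (simp add: K_def algebra_simps)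
  qed
  then show ?thesis using that[of "36*(N0+M)*S"] N0 M S0 by simp
qed

section \<open>Summability of the weighted coefficients\<close>

lemma summable_square_mult_geometric:
  assumes q: "0 \<le> q" "q < (1::real)"
  shows "summable (\<lambda>k::nat. (real k + 3)^2 * q^k)"
proof -
  define c where "c = (1+q)/2"
  have c: "c < 1" "q < c" using q by (auto simp: c_def)
  have "((\<lambda>k::nat. ((real k + 4)/(real k + 3))^2 * q) \<longlongrightarrow> q) at_top"
    by real_asymp
  from order_tendstoD(2)[OF this c(2)] obtain N where
    N: "\<And>k. k \<ge> N \<Longrightarrow> ((real k + 4)/(real k + 3))^2 * q < c"
    by (auto simp: eventually_at_top_linorder)
  show ?thesis
  proof (rule summable_ratio_test[OF c(1), of N])
    fix n assume n: "n \<ge> N"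
    have "(real (Suc n) + 3)^2 * q^(Suc n) = (((real n + 4)/(real n + 3))^2 * q) * ((real n + 3)^2 * q^n)"
    proof -
      have "(real (Suc n) + 3)^2 * q^(Suc n) = (real n + 4)^2 * (q * q^n)" by simp
      also have "\<dots> = (((real n + 4)/(real n + 3))^2 * (real n + 3)^2) * (q * q^n)"
        by (simp add: power_divide)
      finally show ?thesis by (simp add: mult_ac)
    qed
    also have "\<dots> \<le> c * ((real n + 3)^2 * q^n)"
      using N[OF n] q by (intro mult_right_mono) auto
    finally show "norm ((real (Suc n) + 3)^2 * q^(Suc n)) \<le> c * norm ((real n + 3)^2 * q^n)"
      using q by simp
  qed
qed

lemma floor_log2_bounds:
  assumes "1 \<le> (x::real)"
  shows "2 ^ nat \<lfloor>log 2 x\<rfloor> \<le> x" "x < 2 ^ (nat \<lfloor>log 2 x\<rfloor> + 1)"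
proof -
  have "2 powr (real_of_int \<lfloor>log 2 x\<rfloor>) \<le> x \<and> x < 2 powr (real_of_int \<lfloor>log 2 x\<rfloor> + 1)"
    using floor_log_eq_powr_iff[of x 2 "\<lfloor>log 2 x\<rfloor>"] assms by simp
  moreover have "real_of_int \<lfloor>log 2 x\<rfloor> = real (nat \<lfloor>log 2 x\<rfloor>)" using assms by simp
  ultimately show "2 ^ nat \<lfloor>log 2 x\<rfloor> \<le> x" "x < 2 ^ (nat \<lfloor>log 2 x\<rfloor> + 1)"
    by (simp_all add: powr_realpow[symmetric] powr_add)
qed

lemma summable_of_dyadic_blocks:
  fixes w :: "nat \<Rightarrow> real" and lam :: "nat \<Rightarrow> real"
  assumes lim: "filterlim lam at_top sequentially"
    and w0: "\<And>n. 0 \<le> w n"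
    and q: "0 \<le> q" "q < 1" and C: "0 \<le> C"
    and block: "\<And>k. k \<ge> K0 \<Longrightarrow>
       (\<Sum>n\<in>{n. 2^k \<le> lam n \<and> lam n < 2^(k+1)}. w n) \<le> C * (real k + 3)^2 * q^k"
  shows "summable w"
proof -
  define kn where "kn n = nat \<lfloor>log 2 (lam n)\<rfloor>" for n
  define f where "f k = C * ((real k + 3)^2 * q^k)" for k
  have sf: "summable f" unfolding f_def by (intro summable_mult summable_square_mult_geometric q)
  have f0: "0 \<le> f k" for k unfolding f_def using q C by simp
  have "(\<Sum>i<N. w i) \<le> (\<Sum>n\<in>{n. lam n \<le> 2^K0}. w n) + suminf f" for N
  proof -
    define A where "A = {n\<in>{..<N}. lam n < 2^K0}"
    define B where "B = {n\<in>{..<N}. \<not> lam n < 2^K0}"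
    have "(\<Sum>i<N. w i) = (\<Sum>n\<in>A. w n) + (\<Sum>n\<in>B. w n)"
      by (subst sum.union_disjoint[symmetric]) (auto simp: A_def B_def intro!: sum.cong)
    also have "(\<Sum>n\<in>A. w n) \<le> (\<Sum>n\<in>{n. lam n \<le> 2^K0}. w n)"
      by (rule sum_mono2[OF finite_sublevel_of_filterlim_at_top[OF lim]]) (auto simp: A_def w0)
    also have "(\<Sum>n\<in>B. w n) \<le> suminf f"
    proof -
      have Bp: "K0 \<le> kn n \<and> 2^kn n \<le> lam n \<and> lam n < 2^(kn n + 1)" if "n \<in> B" for n
      proof -
        have l: "2^K0 \<le> lam n" using that by (auto simp: B_def)
        moreover have "(1::real) \<le> 2^K0" by simp
        ultimately have "1 \<le> lam n" by linarith
        from floor_log2_bounds[OF this] have d: "2^kn n \<le> lam n" "lam n < 2^(kn n + 1)"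
          unfolding kn_def by simp_all
        then have "(2::real)^K0 < 2^(kn n + 1)" using l by linarith
        then have "K0 < kn n + 1" using power_strict_increasing_iff[of "2::real" K0 "kn n + 1"] by simp
        then show ?thesis using d by simp
      qed
      have "(\<Sum>n\<in>B. w n) = (\<Sum>k\<in>kn ` B. \<Sum>n\<in>{n\<in>B. kn n = k}. w n)"
        by (rule sum.image_gen) (simp add: B_def)
      also have "\<dots> \<le> (\<Sum>k\<in>kn ` B. f k)"
      proof (rule sum_mono)
        fix k assume k: "k \<in> kn ` B"
        have "(\<Sum>n\<in>{n\<in>B. kn n = k}. w n) \<le> (\<Sum>n\<in>{n. 2^k \<le> lam n \<and> lam n < 2^(k+1)}. w n)"
          using Bp w0
          by (intro sum_mono2 finite_subset[OF _ finite_sublevel_of_filterlim_at_top[OF lim, of "2^(k+1)"]]) auto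
        also have "\<dots> \<le> f k"
          using block[of k] k Bp by (auto simp: f_def mult.assoc)
        finally show "(\<Sum>n\<in>{n\<in>B. kn n = k}. w n) \<le> f k" .
      qed
      also have "\<dots> \<le> suminf f"
        by (rule sum_le_suminf[OF sf]) (auto simp: B_def f0)
      finally show ?thesis .
    qed
    finally show ?thesis by simp
  qed
  then show ?thesis by (intro summableI_nonneg_bounded[OF w0])
qed

lemma power_of_two_powr: "((2::real)^k) powr a = (2 powr a)^k"
  by (simp add: powr_realpow[symmetric] powr_powr powr_power mult.commute)

lemma one_plus_ln_le_dyadic:
  assumes "0 < x" "x < 2^(k+1)"
  shows "1 + ln (1 + x) \<le> real k + 3"
proof -
  have "(1::real) \<le> 2^k" "(2::real)^(k+1) = 2 * 2^k" "(2::real)^(k+2) = 4 * 2^k" by simp_all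
  then have "1 + x \<le> 2^(k+2)" using assms(2) by linarith
  then have "ln (1+x) \<le> ln (2^(k+2))" using assms by simp
  also have "\<dots> = real (k+2) * ln 2" by (rule ln_realpow)
  also have "\<dots> \<le> real (k+2) * 1" using ln_2_less_1 by (intro mult_left_mono) auto
  finally show ?thesis by simp
qed

lemma decay_weight_le_dyadic:
  fixes x :: real and z :: complex
  assumes x: "2^k \<le> x" "x < 2^(k+1)" and z: "cmod z \<le> M * x powr (-\<beta>)" and \<beta>: "0 \<le> \<beta>"
  shows "(cmod z)^2 * (1 + ln (1 + x)) \<le> M^2 * (real k + 3) * (2 powr (-2*\<beta>))^k"
proof -
  have x0: "0 < x" using x(1) by (smt (verit) zero_less_power)
  have "(cmod z)^2 \<le> (M * x powr (-\<beta>))^2"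
    using z by (intro power_mono) auto
  also have "\<dots> = M^2 * x powr (-2*\<beta>)"
    using x0 by (simp add: power_mult_distrib powr_power)
  also have "\<dots> \<le> M^2 * (2^k) powr (-2*\<beta>)"
    using \<beta> x by (intro mult_left_mono powr_mono2') auto
  also have "\<dots> = M^2 * (2 powr (-2*\<beta>))^k" by (simp add: power_of_two_powr)
  finally have "(cmod z)^2 \<le> M^2 * (2 powr (-2*\<beta>))^k" .
  moreover have "1 + ln (1 + x) \<le> real k + 3" by (rule one_plus_ln_le_dyadic[OF x0 x(2)])
  ultimately have "(cmod z)^2 * (1 + ln (1 + x)) \<le> (M^2 * (2 powr (-2*\<beta>))^k) * (real k + 3)"
    using x0 by (intro mult_mono) auto
  then show ?thesis by (simp add: mult_ac)
qed

lemma weight_le_moment_dyadic: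
  fixes x :: real
  assumes w: "0 \<le> w" and x: "2^k \<le> x" "x < 2^(k+1)"
  shows "w * (1 + ln (1 + x)) \<le> x^2 * w * ((real k + 3) / 4^k)"
proof -
  have x0: "0 < x" using x(1) by (smt (verit) zero_less_power)
  have "w * (1 + ln (1 + x)) = x^2 * w * ((1 + ln (1 + x)) / x^2)"
    using x0 by (simp add: field_simps)
  also have "\<dots> \<le> x^2 * w * ((real k + 3) / 4^k)"
  proof (intro mult_left_mono frac_le)
    show "1 + ln (1 + x) \<le> real k + 3" by (rule one_plus_ln_le_dyadic[OF x0 x(2)])
    have "(2^k)^2 \<le> x^2" using x by (intro power_mono) auto
    moreover have "(4::real)^k = (2^k)^2" by (induction k) (simp_all add: power2_eq_square)
    ultimately show "4^k \<le> x^2" by simp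
  qed (use x0 w in auto)
  finally show ?thesis .
qed

lemma card_sublevel_dyadic_le:
  assumes pos: "\<And>n. lam n > (0::real)" and lim: "filterlim lam at_top sequentially"
    and Mc: "0 \<le> Mc"
    and cu: "\<And>j::nat. real (card {n. real j < lam n \<and> lam n \<le> real j + 1}) \<le> N0 + Mc * ln (real j + 1)"
  shows "real (card {n. lam n \<le> 2^K}) \<le> 2^K * (N0 + Mc * real K)"
proof -
  define window where "window j = {n. real j < lam n \<and> lam n \<le> real j + 1}" for j :: nat
  have "{n. lam n \<le> 2^K} \<subseteq> (\<Union>j\<in>{..<2^K}. window j)"
  proof
    fix n assume n: "n \<in> {n. lam n \<le> 2^K}"
    define j where "j = nat (\<lceil>lam n\<rceil> - 1)"
    have j: "real j < lam n" "lam n \<le> real j + 1"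
      unfolding j_def using unit_window_index[OF pos] by auto
    then have "real j < 2^K" using less_le_trans[OF j(1)] n by blast
    then have "j < 2^K" by (metis of_nat_less_iff of_nat_numeral of_nat_power)
    then show "n \<in> (\<Union>j\<in>{..<2^K}. window j)" using j by (auto simp: window_def)
  qed
  then have "card {n. lam n \<le> 2^K} \<le> card (\<Union>j\<in>{..<2^K}. window j)"
    by (intro card_mono finite_UN_I) (auto simp: window_def finite_unit_window[OF lim])
  also have "\<dots> \<le> (\<Sum>j<2^K. card (window j))" by (rule card_UN_le) simp
  finally have "real (card {n. lam n \<le> 2^K}) \<le> (\<Sum>j<2^K. real (card (window j)))"
    unfolding of_nat_sum[symmetric] of_nat_le_iff .
  also have "\<dots> \<le> (\<Sum>j<(2::nat)^K. N0 + Mc * real K)"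
  proof (rule sum_mono)
    fix j assume j: "j \<in> {..<(2::nat)^K}"
    then have "real j + 1 \<le> 2^K"
      by (metis Suc_leI lessThan_iff of_nat_Suc of_nat_le_iff of_nat_numeral of_nat_power add.commute)
    then have "ln (real j + 1) \<le> ln (2^K)" by simp
    also have "\<dots> = real K * ln 2" by (rule ln_realpow)
    also have "\<dots> \<le> real K" using ln_2_less_1 by (simp add: mult_left_le)
    finally show "real (card (window j)) \<le> N0 + Mc * real K"
      using cu[of j] Mc unfolding window_def by (smt (verit) mult_left_mono)
  qed
  also have "\<dots> = 2^K * (N0 + Mc * real K)" by simp
  finally show ?thesis .
qed

lemma summable_log_weighted_of_decay:
  fixes lam :: "nat \<Rightarrow> real" and r :: "nat \<Rightarrow> complex"
  assumes pos: "\<And>n. lam n > 0" and lim: "filterlim lam at_top sequentially"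
    and cnt: "\<exists>M>0. \<forall>\<^sub>F T in at_top. real (card {n. T < lam n \<and> lam n \<le> T + 1}) \<le> M * \<bar>ln T\<bar>"
    and \<beta>: "\<beta> > 1/2"
    and decay: "\<exists>M>0. \<forall>\<^sub>F n in sequentially. cmod (r n) \<le> M * \<bar>lam n powr (-\<beta>)\<bar>"
  shows "summable (\<lambda>n. (cmod (r n))^2 * (1 + ln (1 + lam n)))"
proof -
  obtain N0 Mc where N0: "0 \<le> N0" and Mc: "0 \<le> Mc"
    and cu: "\<And>j::nat. real (card {n. real j < lam n \<and> lam n \<le> real j + 1}) \<le> N0 + Mc * ln (real j + 1)"
    using card_unit_window_le_log[OF lim cnt] by blast
  obtain M1 n0 where M1: "M1 > 0" and n0: "\<And>n. n \<ge> n0 \<Longrightarrow> cmod (r n) \<le> M1 * \<bar>lam n powr (-\<beta>)\<bar>"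
    using decay by (auto simp: eventually_sequentially)
  obtain K0 where K0: "(\<Sum>m<n0. lam m) < 2^K0" using real_arch_pow[of 2 "\<Sum>m<n0. lam m"] by auto
  have small: "lam m < 2^K0" if "m < n0" for m
  proof -
    have "lam m \<le> (\<Sum>m<n0. lam m)"
      by (rule member_le_sum) (use that pos less_imp_le in auto)
    then show ?thesis using K0 by linarith
  qed
  define q where "q = 2 powr (1 - 2*\<beta>)"
  have q0: "0 \<le> q" by (simp add: q_def)
  have q1: "q < 1"
    using powr_less_mono[of "1 - 2*\<beta>" 0 2] \<beta> by (simp add: q_def)
  have qq: "2 * 2 powr (-2*\<beta>) = q"
    by (simp add: q_def powr_add[symmetric] powr_diff powr_minus divide_inverse)
  define C where "C = 2 * M1^2 * (N0 + Mc)"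
  show ?thesis
  proof (rule summable_of_dyadic_blocks[OF lim _ q0 q1, of _ C K0])
    show "0 \<le> C" using N0 Mc by (simp add: C_def)
    show "0 \<le> (cmod (r n))^2 * (1 + ln (1 + lam n))" for n using pos[of n] by simp
    fix k :: nat assume k: "K0 \<le> k"
    define G where "G = {n. 2^k \<le> lam n \<and> lam n < 2^(k+1)}"
    define B where "B = M1^2 * (real k + 3) * (2 powr (-2*\<beta>))^k"
    have pointwise: "(cmod (r n))^2 * (1 + ln (1 + lam n)) \<le> B" if n: "n \<in> G" for n
    proof -
      have l: "2^k \<le> lam n" "lam n < 2^(k+1)" using n by (auto simp: G_def)
      have "n \<ge> n0"
      proof (rule ccontr)
        assume "\<not> n \<ge> n0"
        then have "lam n < 2^K0" using small by simp
        moreover have "(2::real)^K0 \<le> 2^k" using k by (intro power_increasing) auto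
        ultimately show False using l by linarith
      qed
      then show ?thesis
        unfolding B_def using n0 pos[of n] \<beta> by (intro decay_weight_le_dyadic l) auto
    qed
    have "card G \<le> card {n. lam n \<le> 2^(k+1)}"
      by (intro card_mono finite_sublevel_of_filterlim_at_top[OF lim]) (auto simp: G_def)
    then have cardG: "real (card G) \<le> 2^(k+1) * (N0 + Mc * (real k + 1))"
      using card_sublevel_dyadic_le[OF pos lim Mc cu, of "k+1"] by (simp add: add.commute)
    have "(\<Sum>n\<in>G. (cmod (r n))^2 * (1 + ln (1 + lam n))) \<le> real (card G) * B"
      using sum_bounded_above[of G _ B] pointwise by simp
    also have "\<dots> \<le> (2^(k+1) * (N0 + Mc * (real k + 1))) * B"
      by (intro mult_right_mono cardG) (simp add: B_def)
    also have "\<dots> = 2 * M1^2 * ((N0 + Mc * (real k + 1)) * (real k + 3)) * (2 * 2 powr (-2*\<beta>))^k"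
      unfolding B_def power_mult_distrib by (simp add: mult_ac)
    also have "\<dots> = 2 * M1^2 * ((N0 + Mc * (real k + 1)) * (real k + 3)) * q^k"
      by (simp only: qq)
    also have "\<dots> \<le> 2 * M1^2 * ((N0 + Mc) * (real k + 3)^2) * q^k"
    proof -
      have "N0 + Mc * (real k + 1) \<le> (N0 + Mc) * (real k + 3)"
        using N0 Mc by (simp add: algebra_simps)
      then have "(N0 + Mc * (real k + 1)) * (real k + 3) \<le> ((N0 + Mc) * (real k + 3)) * (real k + 3)"
        by (rule mult_right_mono) simp
      also have "\<dots> = (N0 + Mc) * (real k + 3)^2" by (simp add: power2_eq_square)
      finally show ?thesis using q0 by (intro mult_right_mono mult_left_mono) auto
    qed
    finally show "(\<Sum>n\<in>G. (cmod (r n))^2 * (1 + ln (1 + lam n))) \<le> C * (real k + 3)^2 * q^k"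
      by (simp add: C_def mult_ac)
  qed
qed

text \<open>Case (b) only needs \<open>\<theta> < 2\<close>: on the dyadic block \<open>[2^k, 2^(k+1))\<close> the weight
  \<open>|r_n|^2 log \<lambda>_n\<close> is at most \<open>O(k 4^-k \<lambda>_n^2 |r_n|^2)\<close>, and the block sums of \<open>\<lambda>_n^2 |r_n|^2\<close>
  are \<open>O(2^(k \<theta>))\<close>.\<close>

lemma summable_log_weighted_of_moment:
  fixes lam :: "nat \<Rightarrow> real" and r :: "nat \<Rightarrow> complex"
  assumes pos: "\<And>n. lam n > 0" and lim: "filterlim lam at_top sequentially"
    and \<theta>: "0 \<le> \<theta>" "\<theta> < 2"
    and moment: "\<exists>M>0. \<forall>\<^sub>F T in at_top.
             \<bar>\<Sum>n\<in>{n. lam n \<le> T}. (lam n)^2 * (cmod (r n))^2\<bar> \<le> M * \<bar>T powr \<theta>\<bar>"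
  shows "summable (\<lambda>n. (cmod (r n))^2 * (1 + ln (1 + lam n)))"
proof -
  obtain M T0 where M: "M > 0" and T0: "\<And>T. T \<ge> T0 \<Longrightarrow>
      \<bar>\<Sum>n\<in>{n. lam n \<le> T}. (lam n)^2 * (cmod (r n))^2\<bar> \<le> M * \<bar>T powr \<theta>\<bar>"
    using moment by (auto simp: eventually_at_top_linorder)
  obtain K0 where K0: "max T0 1 < 2^K0" using real_arch_pow[of 2 "max T0 1"] by auto
  define q where "q = 2 powr \<theta> / 4"
  have q0: "0 \<le> q" by (simp add: q_def)
  have q1: "q < 1"
    using powr_less_mono[of \<theta> 2 2] \<theta> by (simp add: q_def)
  show ?thesis
  proof (rule summable_of_dyadic_blocks[OF lim _ q0 q1, of _ "M * 2 powr \<theta>" K0])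
    show "0 \<le> M * 2 powr \<theta>" using M by simp
    show "0 \<le> (cmod (r n))^2 * (1 + ln (1 + lam n))" for n using pos[of n] by simp
    fix k :: nat assume k: "K0 \<le> k"
    define G where "G = {n. 2^k \<le> lam n \<and> lam n < 2^(k+1)}"
    have "(\<Sum>n\<in>G. (cmod (r n))^2 * (1 + ln (1 + lam n))) \<le>
          (\<Sum>n\<in>G. (lam n)^2 * (cmod (r n))^2 * ((real k + 3) / 4^k))"
      by (intro sum_mono weight_le_moment_dyadic) (auto simp: G_def)
    also have "\<dots> = (\<Sum>n\<in>G. (lam n)^2 * (cmod (r n))^2) * ((real k + 3) / 4^k)"
      by (rule sum_distrib_right[symmetric])
    also have "\<dots> \<le> (M * 2 powr \<theta> * (2 powr \<theta>)^k) * ((real k + 3) / 4^k)"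
    proof (rule mult_right_mono)
      have T: "2^(k+1) \<ge> T0"
        using K0 power_increasing[of K0 "k+1" "2::real"] k by linarith
      have "(\<Sum>n\<in>G. (lam n)^2 * (cmod (r n))^2) \<le> (\<Sum>n\<in>{n. lam n \<le> 2^(k+1)}. (lam n)^2 * (cmod (r n))^2)"
        by (rule sum_mono2[OF finite_sublevel_of_filterlim_at_top[OF lim]]) (auto simp: G_def)
      also have "\<dots> \<le> M * \<bar>(2^(k+1)) powr \<theta>\<bar>"
        using T0[OF T] by linarith
      also have "\<bar>((2::real)^(k+1)) powr \<theta>\<bar> = 2 powr \<theta> * (2 powr \<theta>)^k"
        using power_of_two_powr[of "k+1" \<theta>] by simp
      finally show "(\<Sum>n\<in>G. (lam n)^2 * (cmod (r n))^2) \<le> M * 2 powr \<theta> * (2 powr \<theta>)^k"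
        by (simp add: mult.assoc)
    qed simp
    also have "\<dots> = M * 2 powr \<theta> * (real k + 3) * q^k"
      by (simp add: q_def power_divide)
    also have "\<dots> \<le> M * 2 powr \<theta> * (real k + 3)^2 * q^k"
      using M q0 by (intro mult_right_mono mult_left_mono) (auto simp: power2_eq_square)
    finally show "(\<Sum>n\<in>G. (cmod (r n))^2 * (1 + ln (1 + lam n))) \<le> M * 2 powr \<theta> * (real k + 3)^2 * q^k" .
  qed
qed

section \<open>Trigonometric polynomials\<close>

definition cis_sum :: "(complex \<times> real) list \<Rightarrow> real \<Rightarrow> complex" where
  "cis_sum xs y = (\<Sum>(a,\<mu>)\<leftarrow>xs. a * exp (\<i> * complex_of_real (\<mu>*y)))"

lemma cis_sum_Nil [simp]: "cis_sum [] y = 0"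
  and cis_sum_Cons [simp]: "cis_sum ((a,\<mu>) # xs) y = a * exp (\<i> * complex_of_real (\<mu>*y)) + cis_sum xs y"
  and cis_sum_append [simp]: "cis_sum (xs @ ys) y = cis_sum xs y + cis_sum ys y"
  by (simp_all add: cis_sum_def)

lemma cis_sum_mult:
  "cis_sum [(a*b, \<mu>+\<nu>). (a,\<mu>) \<leftarrow> xs, (b,\<nu>) \<leftarrow> ys] y = cis_sum xs y * cis_sum ys y"
proof (induction xs)
  case (Cons x xs)
  obtain a \<mu> where x: "x = (a,\<mu>)" by fastforce
  have "cis_sum [(a*b, \<mu>+\<nu>). (b,\<nu>) \<leftarrow> ys] y = a * exp (\<i> * complex_of_real (\<mu>*y)) * cis_sum ys y"
  proof (induction ys)
    case (Cons z ys)
    then show ?case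
      by (cases z) (simp add: algebra_simps exp_add[symmetric])
  qed simp
  then show ?case using Cons by (simp add: x algebra_simps)
qed simp

lemma trig_poly_eq_cis_sum:
  "trig_poly (length xs) (\<lambda>n. fst (xs ! (n-1))) (\<lambda>n. snd (xs ! (n-1))) y = cis_sum xs y"
proof -
  have "trig_poly (length xs) (\<lambda>n. fst (xs ! (n-1))) (\<lambda>n. snd (xs ! (n-1))) y =
      (\<Sum>i<length xs. fst (xs ! i) * exp (\<i> * complex_of_real (snd (xs ! i) * y)))"
    unfolding trig_poly_def One_nat_def sum.atLeast1_atMost_eq by simp
  also have "\<dots> = cis_sum xs y"
    unfolding cis_sum_def sum_list_sum_nth by (simp add: atLeast0LessThan case_prod_beta)
  finally show ?thesis .
qed

lemma cis_sum_eq_trig_poly: "trig_poly N a mu y = cis_sum (map (\<lambda>n. (a n, mu n)) [1..<Suc N]) y"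
proof -
  have "trig_poly N a mu y = (\<Sum>n\<in>set [1..<Suc N]. a n * exp (\<i> * complex_of_real (mu n * y)))"
    by (simp only: trig_poly_def set_upt atLeastLessThanSuc_atLeastAtMost)
  also have "\<dots> = cis_sum (map (\<lambda>n. (a n, mu n)) [1..<Suc N]) y"
    unfolding sum_set_upt_conv_sum_list_nat by (simp add: cis_sum_def o_def)
  finally show ?thesis .
qed

lemma has_integral_cis_sum:
  "0 \<le> Y \<Longrightarrow> (cis_sum xs has_integral (\<Sum>(a,\<mu>)\<leftarrow>xs. a * cis_integral \<mu> 0 Y)) {0..Y}"
proof (induction xs)
  case Nil then show ?case by (simp add: cis_sum_def[abs_def])
next
  case (Cons x xs)
  obtain a \<mu> where x: "x = (a,\<mu>)" by fastforce
  have "((\<lambda>y. a * exp (\<i> * complex_of_real (\<mu>*y)) + cis_sum xs y) has_integral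
      (a * cis_integral \<mu> 0 Y + (\<Sum>(a,\<mu>)\<leftarrow>xs. a * cis_integral \<mu> 0 Y))) {0..Y}"
    by (intro has_integral_add has_integral_mult_right has_integral_cis_integral Cons)
  then show ?case by (simp add: x)
qed

lemma cis_sum_mean:
  "((\<lambda>Y. complex_of_real (1/Y) * integral {0..Y} (cis_sum xs)) \<longlongrightarrow>
     (\<Sum>(a,\<mu>)\<leftarrow>xs. if \<mu> = 0 then a else 0)) at_top"
proof -
  have "((\<lambda>Y. complex_of_real (1/Y) * (\<Sum>(a,\<mu>)\<leftarrow>xs. a * cis_integral \<mu> 0 Y)) \<longlongrightarrow>
      (\<Sum>(a,\<mu>)\<leftarrow>xs. if \<mu> = 0 then a else 0)) at_top"
  proof (induction xs)
    case (Cons x xs)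
    obtain a \<mu> where x: "x = (a,\<mu>)" by fastforce
    have "((\<lambda>Y. a * (complex_of_real (1/Y) * cis_integral \<mu> 0 Y) +
        complex_of_real (1/Y) * (\<Sum>(a,\<mu>)\<leftarrow>xs. a * cis_integral \<mu> 0 Y)) \<longlongrightarrow>
        a * (if \<mu> = 0 then 1 else 0) + (\<Sum>(a,\<mu>)\<leftarrow>xs. if \<mu> = 0 then a else 0)) at_top"
      by (intro tendsto_add tendsto_mult tendsto_const cis_integral_mean Cons)
    moreover have "a * (if \<mu> = 0 then 1 else 0) + (\<Sum>(a,\<mu>)\<leftarrow>xs. if \<mu> = 0 then a else 0) =
        (\<Sum>(a,\<mu>)\<leftarrow>x # xs. if \<mu> = 0 then a else 0)"
      by (simp add: x)
    ultimately show ?case by (simp add: x distrib_left mult.left_commute)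
  qed simp
  moreover have "\<forall>\<^sub>F Y in at_top. complex_of_real (1/Y) * (\<Sum>(a,\<mu>)\<leftarrow>xs. a * cis_integral \<mu> 0 Y) =
      complex_of_real (1/Y) * integral {0..Y} (cis_sum xs)"
    using eventually_ge_at_top[of "0::real"]
    by eventually_elim (simp add: integral_unique[OF has_integral_cis_sum])
  ultimately show ?thesis by (rule Lim_transform_eventually)
qed

text \<open>The list encoding makes closure under products immediate.\<close>

definition real_trig_poly :: "(real \<Rightarrow> real) \<Rightarrow> bool" where
  "real_trig_poly p \<longleftrightarrow> (\<exists>xs. \<forall>y. complex_of_real (p y) = cis_sum xs y)"

lemma real_trig_poly_const: "real_trig_poly (\<lambda>y. c)"
  unfolding real_trig_poly_def by (rule exI[of _ "[(complex_of_real c, 0)]"]) simp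

lemma real_trig_poly_add:
  assumes "real_trig_poly p" "real_trig_poly q"
  shows "real_trig_poly (\<lambda>y. p y + q y)"
proof -
  obtain xs ys where "\<And>y. complex_of_real (p y) = cis_sum xs y" "\<And>y. complex_of_real (q y) = cis_sum ys y"
    using assms unfolding real_trig_poly_def by blast
  then have "\<And>y. complex_of_real (p y + q y) = cis_sum (xs @ ys) y" by simp
  then show ?thesis unfolding real_trig_poly_def by blast
qed

lemma real_trig_poly_mult:
  assumes "real_trig_poly p" "real_trig_poly q"
  shows "real_trig_poly (\<lambda>y. p y * q y)"
proof -
  obtain xs ys where "\<And>y. complex_of_real (p y) = cis_sum xs y" "\<And>y. complex_of_real (q y) = cis_sum ys y"
    using assms unfolding real_trig_poly_def by blast
  then have "\<And>y. complex_of_real (p y * q y) = cis_sum [(a*b, \<mu>+\<nu>). (a,\<mu>) \<leftarrow> xs, (b,\<nu>) \<leftarrow> ys] y"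
    by (simp only: cis_sum_mult of_real_mult)
  then show ?thesis unfolding real_trig_poly_def by blast
qed

lemma real_trig_poly_polynomial_function:
  assumes "real_polynomial_function h" and "real_trig_poly p"
  shows "real_trig_poly (\<lambda>y. h (p y))"
  using assms(1)
proof induction
  case (linear f)
  then obtain c where "f = (\<lambda>x. x * c)" by (auto simp: real_bounded_linear)
  then show ?case using real_trig_poly_mult[OF assms(2) real_trig_poly_const] by simp
qed (auto intro: real_trig_poly_const real_trig_poly_add[of "\<lambda>y. _ (p y)"] real_trig_poly_mult[of "\<lambda>y. _ (p y)"])

lemma cis_sum_map: "cis_sum (map (\<lambda>n. (a n, mu n)) ns) y = (\<Sum>n\<leftarrow>ns. a n * exp (\<i> * complex_of_real (mu n * y)))"
  by (simp add: cis_sum_def o_def)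

lemma real_trig_poly_exp_sum:
  assumes "finite F"
  shows "real_trig_poly (\<lambda>y. c + Re (exp_sum F r lam y))"
proof -
  define ns where "ns = sorted_list_of_set F"
  have set_sum: "(\<Sum>n\<leftarrow>ns. f n) = (\<Sum>n\<in>F. f n)" for f :: "nat \<Rightarrow> complex"
    using assms by (simp add: ns_def sum_list_distinct_conv_sum_set)
  define xs where "xs = (complex_of_real c, 0) # map (\<lambda>n. (r n / 2, lam n)) ns @
      map (\<lambda>n. (cnj (r n) / 2, - lam n)) ns"
  have "complex_of_real (c + Re (exp_sum F r lam y)) = cis_sum xs y" for y
  proof -
    have pos_freqs: "cis_sum (map (\<lambda>n. (r n / 2, lam n)) ns) y = exp_sum F r lam y / 2"
      unfolding cis_sum_map set_sum exp_sum_def by (simp add: sum_divide_distrib)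
    have neg_freqs: "cis_sum (map (\<lambda>n. (cnj (r n) / 2, - lam n)) ns) y = cnj (exp_sum F r lam y) / 2"
      unfolding cis_sum_map set_sum exp_sum_def by (simp add: sum_divide_distrib exp_cnj)
    show ?thesis
      unfolding xs_def cis_sum_Cons cis_sum_append pos_freqs neg_freqs
      using complex_add_cnj[of "exp_sum F r lam y"] by (simp add: add_divide_distrib[symmetric])
  qed
  then show ?thesis unfolding real_trig_poly_def by blast
qed

lemma real_trig_polyE:
  assumes "real_trig_poly p"
  obtains N a mu where "\<And>y. trig_poly N a mu y = complex_of_real (p y)"
  using assms trig_poly_eq_cis_sum unfolding real_trig_poly_def by metis

lemma continuous_on_real_trig_poly:
  assumes "real_trig_poly p"
  shows "continuous_on A p"
proof -
  obtain N a mu where tp: "\<And>y. trig_poly N a mu y = complex_of_real (p y)"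
    using real_trig_polyE[OF assms] by blast
  have "continuous_on A (\<lambda>y. Re (trig_poly N a mu y))"
    unfolding trig_poly_def by (intro continuous_intros)
  then show ?thesis by (simp add: tp)
qed

lemma real_trig_poly_bounded:
  assumes "real_trig_poly p"
  obtains B where "\<And>y. \<bar>p y\<bar> \<le> B"
proof -
  obtain N a mu where tp: "\<And>y. trig_poly N a mu y = complex_of_real (p y)"
    using real_trig_polyE[OF assms] by blast
  have "\<bar>p y\<bar> \<le> (\<Sum>n=1..N. cmod (a n))" for y
  proof -
    have "\<bar>p y\<bar> = cmod (trig_poly N a mu y)" by (simp add: tp)
    also have "\<dots> \<le> (\<Sum>n=1..N. cmod (a n * exp (\<i> * complex_of_real (mu n * y))))"
      unfolding trig_poly_def by (rule norm_sum)
    also have "\<dots> = (\<Sum>n=1..N. cmod (a n))" by (simp add: norm_mult norm_exp_i_times)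
    finally show ?thesis .
  qed
  then show ?thesis using that by blast
qed

lemma real_trig_poly_mean:
  assumes "real_trig_poly p"
  obtains L where "((\<lambda>Y. (1/Y) * integral {0..Y} p) \<longlongrightarrow> L) at_top"
proof -
  obtain xs where xs: "\<And>y. complex_of_real (p y) = cis_sum xs y"
    using assms by (auto simp: real_trig_poly_def)
  then have cs: "cis_sum xs = (\<lambda>y. complex_of_real (p y))" by auto
  have "integral {0..Y} (cis_sum xs) = complex_of_real (integral {0..Y} p)" for Y
  proof -
    have "p integrable_on {0..Y}"
      by (intro integrable_continuous_interval continuous_on_real_trig_poly assms)
    then show ?thesis
      unfolding cs by (rule integral_unique[OF has_integral_of_real[OF integrable_integral]])
  qed
  then have "((\<lambda>Y. Re (complex_of_real (1/Y) * complex_of_real (integral {0..Y} p))) \<longlongrightarrow>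
      Re (\<Sum>(a,\<mu>)\<leftarrow>xs. if \<mu> = 0 then a else 0)) at_top"
    using tendsto_Re[OF cis_sum_mean[of xs]] by simp
  then show ?thesis using that by simp
qed

section \<open>\<open>B\<^sup>2\<close>-almost periodicity\<close>

definition mean_square :: "(real \<Rightarrow> real) \<Rightarrow> real \<Rightarrow> ennreal" where
  "mean_square f Y = ennreal (1/Y) * (\<integral>\<^sup>+ y\<in>{0..Y}. ennreal ((f y)^2) \<partial>lborel)"

lemma B2_almost_periodicI:
  assumes "\<And>\<epsilon>. \<epsilon> > 0 \<Longrightarrow> \<exists>p. real_trig_poly p \<and> Limsup at_top (mean_square (\<lambda>y. \<phi> y - p y)) < ennreal (\<epsilon>^2)"
  shows "B2_almost_periodic \<phi>"
  unfolding B2_almost_periodic_def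
proof (intro allI impI)
  fix \<epsilon> :: real assume "\<epsilon> > 0"
  then obtain p where p: "real_trig_poly p" and lim: "Limsup at_top (mean_square (\<lambda>y. \<phi> y - p y)) < ennreal (\<epsilon>^2)"
    using assms by blast
  obtain N a mu where tp: "\<And>y. trig_poly N a mu y = complex_of_real (p y)"
    using real_trig_polyE[OF p] by blast
  have "cmod (complex_of_real (\<phi> y) - trig_poly N a mu y) = \<bar>\<phi> y - p y\<bar>" for y
    unfolding tp by (metis norm_of_real of_real_diff)
  then show "\<exists>N a mu. (\<forall>y. Im (trig_poly N a mu y) = 0) \<and>
        Limsup at_top (\<lambda>Y. ennreal (1 / Y) * (\<integral>\<^sup>+ y\<in>{0..Y}.
           ennreal ((cmod (complex_of_real (\<phi> y) - trig_poly N a mu y))^2) \<partial>lborel)) < ennreal (\<epsilon>^2)"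
    using lim by (intro exI[of _ N] exI[of _ a] exI[of _ mu]) (simp add: tp mean_square_def[abs_def])
qed

lemma B2_almost_periodicE:
  assumes "B2_almost_periodic \<phi>" "\<epsilon> > 0"
  obtains p where "real_trig_poly p" "\<forall>\<^sub>F Y in at_top. mean_square (\<lambda>y. \<phi> y - p y) Y < ennreal (\<epsilon>^2)"
proof -
  obtain N a mu where im: "\<And>y. Im (trig_poly N a mu y) = 0" and
    ls: "Limsup at_top (\<lambda>Y::real. ennreal (1 / Y) *
           (\<integral>\<^sup>+ y\<in>{0..Y}. ennreal ((cmod (complex_of_real (\<phi> y) - trig_poly N a mu y))^2) \<partial>lborel))
          < ennreal (\<epsilon>^2)"
    using assms unfolding B2_almost_periodic_def by blast
  define p where "p y = Re (trig_poly N a mu y)" for y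
  have tp: "trig_poly N a mu y = complex_of_real (p y)" for y
    using im[of y] by (simp add: p_def complex_eq_iff)
  have "real_trig_poly p"
    unfolding real_trig_poly_def by (metis tp cis_sum_eq_trig_poly)
  moreover have "cmod (complex_of_real (\<phi> y) - trig_poly N a mu y) = \<bar>\<phi> y - p y\<bar>" for y
    unfolding tp by (metis norm_of_real of_real_diff)
  then have "\<forall>\<^sub>F Y in at_top. mean_square (\<lambda>y. \<phi> y - p y) Y < ennreal (\<epsilon>^2)"
    using Limsup_lessD[OF ls] by (simp add: mean_square_def)
  ultimately show ?thesis using that by blast
qed

lemma square_add_le: "((a::real) + b)^2 \<le> 2 * a^2 + 2 * b^2"
  using sum_squares_ge_zero[of "a - b" 0] by (simp add: power2_eq_square algebra_simps)

lemma ennreal_square_add_le: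
  "ennreal (((a::real) + b)^2) \<le> 2 * ennreal (a^2) + 2 * ennreal (b^2)"
proof -
  have "ennreal ((a + b)^2) \<le> ennreal (2 * a^2 + 2 * b^2)"
    by (rule ennreal_leI[OF square_add_le])
  also have "\<dots> = 2 * ennreal (a^2) + 2 * ennreal (b^2)"
    by (simp add: ennreal_plus ennreal_mult)
  finally show ?thesis .
qed

lemma nn_integral_square_split_le:
  fixes f u v :: "real \<Rightarrow> real"
  assumes [measurable]: "f \<in> borel_measurable borel" "u \<in> borel_measurable borel" "v \<in> borel_measurable borel"
    and split: "\<And>y. y0 \<le> y \<Longrightarrow> y \<le> Y \<Longrightarrow> f y = u y + v y"
  shows "(\<integral>\<^sup>+ y\<in>{0..Y}. ennreal ((f y)^2) \<partial>lborel) \<le>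
    (\<integral>\<^sup>+ y\<in>{0..y0}. ennreal ((f y)^2) \<partial>lborel) + 2 * (\<integral>\<^sup>+ y\<in>{0..Y}. ennreal ((u y)^2) \<partial>lborel) +
    2 * (\<integral>\<^sup>+ y\<in>{y0..Y}. ennreal ((v y)^2) \<partial>lborel)"
proof -
  have "(\<integral>\<^sup>+ y\<in>{0..Y}. ennreal ((f y)^2) \<partial>lborel) \<le>
      (\<integral>\<^sup>+ y. ennreal ((f y)^2) * indicator {0..y0} y +
        (2 * (ennreal ((u y)^2) * indicator {0..Y} y) + 2 * (ennreal ((v y)^2) * indicator {y0..Y} y)) \<partial>lborel)"
  proof (rule nn_integral_mono)
    fix y
    show "ennreal ((f y)^2) * indicator {0..Y} y \<le> ennreal ((f y)^2) * indicator {0..y0} y +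
        (2 * (ennreal ((u y)^2) * indicator {0..Y} y) + 2 * (ennreal ((v y)^2) * indicator {y0..Y} y))"
    proof (cases "y \<in> {0..Y}")
      case inside: True
      show ?thesis
      proof (cases "y0 \<le> y")
        case True
        then show ?thesis
          using inside ennreal_square_add_le[of "u y" "v y"] split[of y] by (auto intro: add_increasing)
      next
        case False
        then have "y \<in> {0..y0}" using inside by auto
        then show ?thesis using inside by (auto intro: add_increasing2)
      qed
    qed simp
  qed
  also have "\<dots> = (\<integral>\<^sup>+ y\<in>{0..y0}. ennreal ((f y)^2) \<partial>lborel) + 2 * (\<integral>\<^sup>+ y\<in>{0..Y}. ennreal ((u y)^2) \<partial>lborel) +
    2 * (\<integral>\<^sup>+ y\<in>{y0..Y}. ennreal ((v y)^2) \<partial>lborel)"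
    by (simp add: nn_integral_add nn_integral_cmult add.assoc)
  finally show ?thesis .
qed

lemma set_nn_integral_square_diff_finite:
  fixes f g :: "real \<Rightarrow> real"
  assumes f: "set_integrable lborel {a..b} (\<lambda>y. (f y)^2)" and g: "\<And>y. \<bar>g y\<bar> \<le> B"
  shows "(\<integral>\<^sup>+ y\<in>{a..b}. ennreal ((f y - g y)^2) \<partial>lborel) < top"
proof -
  define F where "F y = ennreal (indicator {a..b} y *\<^sub>R (f y)^2)" for y
  have "(\<lambda>y. indicator {a..b} y *\<^sub>R (f y)^2) \<in> borel_measurable lborel"
    using f unfolding set_integrable_def by (rule borel_measurable_integrable)
  then have Fm: "F \<in> borel_measurable lborel" unfolding F_def by measurable
  have F_fin: "(\<integral>\<^sup>+ y. F y \<partial>lborel) < top"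
    unfolding F_def using integrableD(2)[OF f[unfolded set_integrable_def]] by (simp add: less_top[symmetric])
  have "(\<integral>\<^sup>+ y\<in>{a..b}. ennreal ((f y - g y)^2) \<partial>lborel) \<le>
      (\<integral>\<^sup>+ y. 2 * F y + 2 * ennreal (B^2) * indicator {a..b} y \<partial>lborel)"
  proof (rule nn_integral_mono)
    fix y
    have gB: "(g y)^2 \<le> B^2" using g[of y] by (metis abs_ge_zero power2_abs power_mono)
    have "ennreal ((f y - g y)^2) \<le> 2 * ennreal ((f y)^2) + 2 * ennreal ((g y)^2)"
      using ennreal_square_add_le[of "f y" "- g y"] by simp
    also have "\<dots> \<le> 2 * ennreal ((f y)^2) + 2 * ennreal (B^2)"
      using gB by (intro add_left_mono mult_left_mono ennreal_leI) auto
    finally show "ennreal ((f y - g y)^2) * indicator {a..b} y \<le> 2 * F y + 2 * ennreal (B^2) * indicator {a..b} y"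
      by (cases "y \<in> {a..b}") (simp_all add: F_def)
  qed
  also have "\<dots> = 2 * (\<integral>\<^sup>+ y. F y \<partial>lborel) + 2 * ennreal (B^2) * emeasure lborel {a..b}"
    using Fm by (simp add: nn_integral_add nn_integral_cmult nn_integral_cmult_indicator)
  also have "\<dots> < top"
    using F_fin by (simp add: ennreal_mult_less_top emeasure_lborel_Icc_eq)
  finally show ?thesis .
qed

lemma set_nn_integral_Re_exp_sum_square_le:
  assumes kernel: "\<And>x F. 0 < x \<Longrightarrow> finite F \<Longrightarrow> (\<Sum>n\<in>F. 1/(1+(x - lam n)^2)) \<le> D*(1+ln(1+x))"
    and pos: "\<And>n. lam n > 0" and F: "finite F" and Y: "1 \<le> Y"
  shows "(\<integral>\<^sup>+ y\<in>{0..Y}. ennreal ((Re (exp_sum F r lam y))^2) \<partial>lborel) \<le>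
      ennreal (16 * Y * D * (\<Sum>m\<in>F. (cmod (r m))^2 * (1 + ln (1 + lam m))))"
proof -
  have D0: "0 \<le> D*(1+ln(1+lam m))" for m
    using kernel[OF pos, of "{}"] by simp
  have "(\<integral>\<^sup>+ y\<in>{0..Y}. ennreal ((Re (exp_sum F r lam y))^2) \<partial>lborel) \<le>
      (\<integral>\<^sup>+ y\<in>{0..Y}. ennreal ((cmod (exp_sum F r lam y))^2) \<partial>lborel)"
  proof (intro nn_integral_mono mult_right_mono ennreal_leI)
    show "(Re (exp_sum F r lam y))^2 \<le> (cmod (exp_sum F r lam y))^2" for y
      by (metis abs_Re_le_cmod abs_ge_zero power2_abs power_mono)
  qed simp
  also have "\<dots> = ennreal (integral {0..Y} (\<lambda>y. (cmod (exp_sum F r lam y))^2))"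
    by (rule nn_integral_has_integral_lebesgue'[OF _ integrable_integral])
      (auto intro!: integrable_continuous_interval continuous_intros)
  also have "\<dots> \<le> ennreal (16 * Y * D * (\<Sum>m\<in>F. (cmod (r m))^2 * (1 + ln (1 + lam m))))"
  proof (rule ennreal_leI)
    have "integral {0..Y} (\<lambda>y. (cmod (exp_sum F r lam y))^2) \<le>
        8*(Y+1) * (\<Sum>m\<in>F. (cmod (r m))^2 * (\<Sum>n\<in>F. 1/(1+(lam m - lam n)^2)))"
      using integral_norm_exp_sum_square_le[OF F] Y by simp
    also have "\<dots> \<le> 8*(Y+1) * (\<Sum>m\<in>F. (cmod (r m))^2 * (D*(1+ln(1+lam m))))"
      using kernel pos F Y by (intro mult_left_mono sum_mono) auto
    also have "\<dots> \<le> 16 * Y * (\<Sum>m\<in>F. (cmod (r m))^2 * (D*(1+ln(1+lam m))))"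
      using Y D0 by (intro mult_right_mono sum_nonneg) auto
    finally show "integral {0..Y} (\<lambda>y. (cmod (exp_sum F r lam y))^2) \<le>
        16 * Y * D * (\<Sum>m\<in>F. (cmod (r m))^2 * (1 + ln (1 + lam m)))"
      by (simp add: sum_distrib_left mult_ac)
  qed
  finally show ?thesis .
qed

lemma summable_small_tail:
  fixes W :: "nat \<Rightarrow> real" and lam :: "nat \<Rightarrow> real"
  assumes W: "summable W" "\<And>n. 0 \<le> W n" and \<eta>: "0 < \<eta>"
  obtains X where "\<And>H. finite H \<Longrightarrow> (\<And>n. n \<in> H \<Longrightarrow> X < lam n) \<Longrightarrow> (\<Sum>n\<in>H. W n) \<le> \<eta>"
proof -
  obtain N where N: "norm (\<Sum>i. W (i + N)) < \<eta>"
    using suminf_exist_split[OF \<eta> W(1)] by blast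
  define X where "X = Max (lam ` {..N})"
  have "(\<Sum>n\<in>H. W n) \<le> \<eta>" if H: "finite H" "\<And>n. n \<in> H \<Longrightarrow> X < lam n" for H
  proof -
    have HN: "N \<le> n" if "n \<in> H" for n
      using H(2)[OF that] Max_ge[of "lam ` {..N}" "lam n"] by (force simp: X_def not_le[symmetric])
    have sW: "summable (\<lambda>i. W (i + N))" using W(1) by (rule summable_ignore_initial_segment)
    have inj: "inj_on (\<lambda>n. n - N) H" by (rule inj_onI) (metis HN le_add_diff_inverse2)
    have "(\<Sum>n\<in>H. W n) = (\<Sum>n\<in>H. W (n - N + N))" using HN by (intro sum.cong) auto
    also have "\<dots> = (\<Sum>i\<in>(\<lambda>n. n - N) ` H. W (i + N))"
      by (rule sum.reindex[OF inj, unfolded o_def, symmetric])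
    also have "\<dots> \<le> (\<Sum>i. W (i + N))"
      by (rule sum_le_suminf[OF sW]) (use H W in auto)
    also have "\<dots> \<le> \<eta>" using N W(2) suminf_nonneg[OF sW] by simp
    finally show ?thesis .
  qed
  then show ?thesis using that by blast
qed

lemma mean_square_truncation_le:
  fixes \<phi> e :: "real \<Rightarrow> real"
  assumes [measurable]: "\<phi> \<in> borel_measurable borel"
    and pos: "\<And>n. lam n > 0" and lim: "filterlim lam at_top sequentially"
    and D: "0 \<le> D"
    and kernel: "\<And>x F. 0 < x \<Longrightarrow> finite F \<Longrightarrow> (\<Sum>n\<in>F. 1/(1+(x - lam n)^2)) \<le> D*(1+ln(1+x))"
    and Y: "1 \<le> Y" "y0 \<le> Y" and X1: "X1 \<le> T"
    and expansion: "\<And>y. y0 \<le> y \<Longrightarrow> \<phi> y = c + Re (exp_sum {n. lam n \<le> T} r lam y) + e y"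
    and tail: "(\<Sum>n\<in>{n. X1 < lam n \<and> lam n \<le> T}. (cmod (r n))^2 * (1 + ln (1 + lam n))) \<le> \<eta>"
  defines "p \<equiv> \<lambda>y. c + Re (exp_sum {n. lam n \<le> X1} r lam y)"
  shows "mean_square (\<lambda>y. \<phi> y - p y) Y \<le>
    ennreal (1/Y) * (\<integral>\<^sup>+ y\<in>{0..y0}. ennreal ((\<phi> y - p y)^2) \<partial>lborel) + ennreal (32 * D * \<eta>) +
    2 * (ennreal (1/Y) * (\<integral>\<^sup>+ y\<in>{y0..Y}. ennreal ((e y)^2) \<partial>lborel))"
proof -
  define F1 where "F1 = {n. lam n \<le> X1}"
  define H where "H = {n. X1 < lam n \<and> lam n \<le> T}"
  have finF1: "finite F1" and finH: "finite H"
    using finite_sublevel_of_filterlim_at_top[OF lim] unfolding F1_def H_def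
    by (auto intro: finite_subset[of _ "{n. lam n \<le> T}"])
  have FT: "{n. lam n \<le> T} = F1 \<union> H" "F1 \<inter> H = {}" using X1 by (auto simp: F1_def H_def)
  have [measurable]: "p \<in> borel_measurable borel" unfolding p_def by measurable
  define v where "v y = \<phi> y - c - Re (exp_sum {n. lam n \<le> T} r lam y)" for y
  have split: "\<phi> y - p y = Re (exp_sum H r lam y) + v y" for y
    unfolding v_def p_def FT(1) exp_sum_union[OF finF1 finH FT(2)] by (simp add: F1_def)
  have v_eq: "(\<integral>\<^sup>+ y\<in>{y0..Y}. ennreal ((v y)^2) \<partial>lborel) = (\<integral>\<^sup>+ y\<in>{y0..Y}. ennreal ((e y)^2) \<partial>lborel)"
    by (rule set_nn_integral_cong) (auto simp: v_def expansion)
  have "0 \<le> (\<Sum>n\<in>H. (cmod (r n))^2 * (1 + ln (1 + lam n)))"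
    using pos by (intro sum_nonneg) (simp add: less_imp_le)
  then have \<eta>: "0 \<le> \<eta>" using tail by (simp add: H_def)
  have "16 * Y * D * (\<Sum>n\<in>H. (cmod (r n))^2 * (1 + ln (1 + lam n))) \<le> 16 * Y * D * \<eta>"
    using tail Y D by (intro mult_left_mono) (auto simp: H_def)
  then have tail_H: "(\<integral>\<^sup>+ y\<in>{0..Y}. ennreal ((Re (exp_sum H r lam y))^2) \<partial>lborel) \<le> ennreal (16 * Y * D * \<eta>)"
    using set_nn_integral_Re_exp_sum_square_le[OF kernel pos finH Y(1), of r] by (meson ennreal_leI order_trans)
  have "(\<integral>\<^sup>+ y\<in>{0..Y}. ennreal ((\<phi> y - p y)^2) \<partial>lborel) \<le>
      (\<integral>\<^sup>+ y\<in>{0..y0}. ennreal ((\<phi> y - p y)^2) \<partial>lborel) +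
      2 * (\<integral>\<^sup>+ y\<in>{0..Y}. ennreal ((Re (exp_sum H r lam y))^2) \<partial>lborel) +
      2 * (\<integral>\<^sup>+ y\<in>{y0..Y}. ennreal ((v y)^2) \<partial>lborel)"
    by (rule nn_integral_square_split_le) (auto simp: v_def split)
  also have "\<dots> \<le> (\<integral>\<^sup>+ y\<in>{0..y0}. ennreal ((\<phi> y - p y)^2) \<partial>lborel) + 2 * ennreal (16 * Y * D * \<eta>) +
      2 * (\<integral>\<^sup>+ y\<in>{y0..Y}. ennreal ((e y)^2) \<partial>lborel)"
    unfolding v_eq using tail_H by (intro add_mono mult_left_mono order.refl) simp_all
  finally have "mean_square (\<lambda>y. \<phi> y - p y) Y \<le> ennreal (1/Y) *
      ((\<integral>\<^sup>+ y\<in>{0..y0}. ennreal ((\<phi> y - p y)^2) \<partial>lborel) + 2 * ennreal (16 * Y * D * \<eta>) +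
      2 * (\<integral>\<^sup>+ y\<in>{y0..Y}. ennreal ((e y)^2) \<partial>lborel))"
    unfolding mean_square_def by (rule mult_left_mono) simp
  moreover have "ennreal (1/Y) * (2 * ennreal (16 * Y * D * \<eta>)) = ennreal (32 * D * \<eta>)"
  proof -
    have "ennreal (1/Y) * (2 * ennreal (16 * Y * D * \<eta>)) = ennreal (1/Y * (2 * (16 * Y * D * \<eta>)))"
      using Y D \<eta> by (simp add: ennreal_mult[symmetric] ennreal_numeral[symmetric] del: ennreal_numeral)
    also have "1/Y * (2 * (16 * Y * D * \<eta>)) = 32 * D * \<eta>" using Y by simp
    finally show ?thesis .
  qed
  ultimately show ?thesis by (simp only: distrib_left mult.left_commute[of "ennreal (1/Y)" 2])
qed

text \<open>Truncating the expansion at a fixed height \<open>X1\<close> gives the approximating trigonometric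
  polynomial; the frequencies in \<open>(X1, e^Y]\<close> contribute a mean square of at most
  \<open>32 D \<Sum>_{\<lambda>_n > X1} |r_n|^2 (1 + log (1 + \<lambda>_n))\<close>, and the error term and the initial segment
  \<open>[0, y0]\<close> contribute nothing in the limit.\<close>

lemma B2_almost_periodic_of_expansion:
  fixes \<phi> :: "real \<Rightarrow> real" and E :: "real \<Rightarrow> real \<Rightarrow> real"
  assumes \<phi>_meas [measurable]: "\<phi> \<in> borel_measurable borel"
    and sqint: "set_integrable lborel {0..y0} (\<lambda>y. (\<phi> y)^2)"
    and pos: "\<And>n. lam n > 0" and lim: "filterlim lam at_top sequentially"
    and expansion: "\<And>y X. y \<ge> y0 \<Longrightarrow> X \<ge> X0 \<Longrightarrow> \<phi> y = c + Re (exp_sum {n. lam n \<le> X} r lam y) + E y X"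
    and err: "((\<lambda>Y. ennreal (1 / Y) * (\<integral>\<^sup>+ y\<in>{y0..Y}. ennreal ((E y (exp Y))^2) \<partial>lborel)) \<longlongrightarrow> 0) at_top"
    and D: "0 \<le> D"
    and kernel: "\<And>x F. 0 < x \<Longrightarrow> finite F \<Longrightarrow> (\<Sum>n\<in>F. 1/(1+(x - lam n)^2)) \<le> D*(1+ln(1+x))"
    and summable: "summable (\<lambda>n. (cmod (r n))^2 * (1 + ln (1 + lam n)))"
  shows "B2_almost_periodic \<phi>"
proof (rule B2_almost_periodicI)
  fix \<epsilon> :: real assume \<epsilon>: "\<epsilon> > 0"
  define \<eta> where "\<eta> = \<epsilon>^2 / (64 * (D + 1))"
  have \<eta>: "\<eta> > 0" using \<epsilon> D by (simp add: \<eta>_def)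
  have "0 \<le> (cmod (r n))^2 * (1 + ln (1 + lam n))" for n
    using pos[of n] by (simp add: less_imp_le)
  then obtain X where tail: "\<And>H. finite H \<Longrightarrow> (\<And>n. n \<in> H \<Longrightarrow> X < lam n) \<Longrightarrow>
      (\<Sum>n\<in>H. (cmod (r n))^2 * (1 + ln (1 + lam n))) \<le> \<eta>"
    using summable_small_tail[OF summable _ \<eta>] by blast
  define X1 where "X1 = max (max X0 X) 1"
  define p where "p y = c + Re (exp_sum {n. lam n \<le> X1} r lam y)" for y
  have p: "real_trig_poly p"
    unfolding p_def by (intro real_trig_poly_exp_sum finite_sublevel_of_filterlim_at_top[OF lim])
  obtain Bp where Bp: "\<And>y. \<bar>p y\<bar> \<le> Bp" using real_trig_poly_bounded[OF p] by blast
  define A where "A = (\<integral>\<^sup>+ y\<in>{0..y0}. ennreal ((\<phi> y - p y)^2) \<partial>lborel)"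
  have A: "A < top" unfolding A_def by (rule set_nn_integral_square_diff_finite[OF sqint Bp])
  define G where "G Y = (\<integral>\<^sup>+ y\<in>{y0..Y}. ennreal ((E y (exp Y))^2) \<partial>lborel)" for Y
  define R where "R Y = ennreal (1/Y) * A + ennreal (32 * D * \<eta>) + 2 * (ennreal (1/Y) * G Y)" for Y
  have bound: "mean_square (\<lambda>y. \<phi> y - p y) Y \<le> R Y" if Y: "max (max 1 y0) (ln X1) \<le> Y" for Y
  proof -
    have "X1 \<le> exp Y"
      using Y exp_le_cancel_iff[of "ln X1" Y] by (simp add: X1_def)
    then have X1Y: "X0 \<le> exp Y" "X1 \<le> exp Y" by (auto simp: X1_def)
    have "(\<Sum>n\<in>{n. X1 < lam n \<and> lam n \<le> exp Y}. (cmod (r n))^2 * (1 + ln (1 + lam n))) \<le> \<eta>"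
      by (rule tail) (auto simp: X1_def intro: finite_subset[OF _ finite_sublevel_of_filterlim_at_top[OF lim]])
    moreover have "1 \<le> Y" "y0 \<le> Y" using Y by auto
    ultimately show ?thesis
      unfolding R_def A_def G_def p_def[abs_def]
      by (intro mean_square_truncation_le[OF \<phi>_meas pos lim D kernel _ _ X1Y(2)] expansion X1Y(1))
  qed
  have "(R \<longlongrightarrow> 0 + ennreal (32 * D * \<eta>) + 2 * 0) at_top"
  proof -
    have "((\<lambda>Y::real. ennreal (1/Y)) \<longlongrightarrow> ennreal 0) at_top"
      by (intro tendsto_ennrealI) real_asymp
    then have "((\<lambda>Y. A * ennreal (1/Y)) \<longlongrightarrow> A * ennreal 0) at_top"
      by (rule ennreal_tendsto_cmult[OF A])
    then show ?thesis
      unfolding R_def G_def using ennreal_tendsto_cmult[OF _ err, of 2]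
      by (intro tendsto_add tendsto_const) (simp_all add: mult.commute)
  qed
  then have "Limsup at_top R = ennreal (32 * D * \<eta>)"
    by (intro lim_imp_Limsup) simp_all
  moreover have "Limsup at_top (mean_square (\<lambda>y. \<phi> y - p y)) \<le> Limsup at_top R"
    by (rule Limsup_mono, rule eventually_at_top_linorderI[of "max (max 1 y0) (ln X1)"]) (rule bound)
  moreover have "ennreal (32 * D * \<eta>) < ennreal (\<epsilon>^2)"
  proof -
    have "32 * D * \<eta> = \<epsilon>^2 * (32 * D / (64 * (D + 1)))" by (simp add: \<eta>_def)
    also have "\<dots> < \<epsilon>^2 * 1"
      using \<epsilon> D by (intro mult_strict_left_mono) (auto simp: field_simps)
    finally show ?thesis using \<epsilon> D \<eta> by (subst ennreal_less_iff) auto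
  qed
  ultimately show "\<exists>p. real_trig_poly p \<and> Limsup at_top (mean_square (\<lambda>y. \<phi> y - p y)) < ennreal (\<epsilon>^2)"
    using p by (intro exI[of _ p]) auto
qed

section \<open>Means of bounded continuous functions of \<open>\<phi>\<close>\<close>

lemma mean_square_add_le:
  assumes [measurable]: "f \<in> borel_measurable borel" "g \<in> borel_measurable borel"
  shows "mean_square (\<lambda>y. f y + g y) Y \<le> 2 * mean_square f Y + 2 * mean_square g Y"
proof -
  have "(\<integral>\<^sup>+ y\<in>{0..Y}. ennreal ((f y + g y)^2) \<partial>lborel) \<le>
      (\<integral>\<^sup>+ y. 2 * (ennreal ((f y)^2) * indicator {0..Y} y) + 2 * (ennreal ((g y)^2) * indicator {0..Y} y) \<partial>lborel)"
    using ennreal_square_add_le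
    by (intro nn_integral_mono) (auto simp: indicator_def distrib_right mult.assoc)
  also have "\<dots> = 2 * (\<integral>\<^sup>+ y\<in>{0..Y}. ennreal ((f y)^2) \<partial>lborel) + 2 * (\<integral>\<^sup>+ y\<in>{0..Y}. ennreal ((g y)^2) \<partial>lborel)"
    by (simp add: nn_integral_add nn_integral_cmult)
  finally have "mean_square (\<lambda>y. f y + g y) Y \<le> ennreal (1/Y) *
      (2 * (\<integral>\<^sup>+ y\<in>{0..Y}. ennreal ((f y)^2) \<partial>lborel) + 2 * (\<integral>\<^sup>+ y\<in>{0..Y}. ennreal ((g y)^2) \<partial>lborel))"
    unfolding mean_square_def by (rule mult_left_mono) simp
  then show ?thesis
    unfolding mean_square_def by (simp only: distrib_left mult.left_commute[of "ennreal (1/Y)" 2])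
qed

lemma mean_square_le_of_bounded:
  assumes "\<And>y. \<bar>g y\<bar> \<le> B" "0 < Y"
  shows "mean_square g Y \<le> ennreal (B^2)"
proof -
  have "(\<integral>\<^sup>+ y\<in>{0..Y}. ennreal ((g y)^2) \<partial>lborel) \<le> (\<integral>\<^sup>+ y. ennreal (B^2) * indicator {0..Y} y \<partial>lborel)"
  proof (intro nn_integral_mono mult_right_mono ennreal_leI)
    show "(g y)^2 \<le> B^2" for y using assms(1)[of y] by (metis abs_ge_zero power2_abs power_mono)
  qed simp
  also have "\<dots> = ennreal (B^2) * ennreal Y"
    using assms(2) by (simp add: nn_integral_cmult_indicator emeasure_lborel_Icc)
  finally have "mean_square g Y \<le> ennreal (1/Y) * (ennreal (B^2) * ennreal Y)"
    unfolding mean_square_def by (rule mult_left_mono) simp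
  also have "\<dots> = ennreal (B^2)"
    using assms(2) by (simp add: ennreal_mult[symmetric] del: ennreal_mult)
  finally show ?thesis .
qed

lemma mean_square_le_mean_square_diff:
  assumes [measurable]: "\<phi> \<in> borel_measurable borel" "p \<in> borel_measurable borel"
    and "\<And>y. \<bar>p y\<bar> \<le> B" "0 < Y"
  shows "mean_square \<phi> Y \<le> 2 * mean_square (\<lambda>y. \<phi> y - p y) Y + 2 * ennreal (B^2)"
  using mean_square_add_le[of "\<lambda>y. \<phi> y - p y" p Y] mean_square_le_of_bounded[OF assms(3,4)]
  by (simp add: add_left_mono mult_left_mono order_trans)

lemma B2_mean_square_bounded:
  assumes [measurable]: "\<phi> \<in> borel_measurable borel" and "B2_almost_periodic \<phi>"
  obtains C where "0 < C" "\<forall>\<^sub>F Y in at_top. mean_square \<phi> Y \<le> ennreal C"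
proof -
  obtain p where p: "real_trig_poly p" and ev: "\<forall>\<^sub>F Y in at_top. mean_square (\<lambda>y. \<phi> y - p y) Y < ennreal (1^2)"
    using B2_almost_periodicE[OF assms(2), of 1] by auto
  obtain B where B: "\<And>y. \<bar>p y\<bar> \<le> B" using real_trig_poly_bounded[OF p] by blast
  have [measurable]: "p \<in> borel_measurable borel"
    using continuous_on_real_trig_poly[OF p] by (rule borel_measurable_continuous_onI)
  have "\<forall>\<^sub>F Y in at_top. mean_square \<phi> Y \<le> ennreal (2 + 2 * B^2)"
    using ev eventually_gt_at_top[of "0::real"]
  proof eventually_elim
    case (elim Y)
    have "mean_square \<phi> Y \<le> 2 * mean_square (\<lambda>y. \<phi> y - p y) Y + 2 * ennreal (B^2)"
      by (rule mean_square_le_mean_square_diff[OF _ _ B elim(2)]) simp_all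
    also have "\<dots> \<le> 2 * ennreal 1 + 2 * ennreal (B^2)"
      using elim(1) by (intro add_right_mono mult_left_mono) auto
    also have "\<dots> = ennreal (2 + 2 * B^2)"
      by (simp add: ennreal_plus ennreal_mult)
    finally show ?case .
  qed
  then show ?thesis using that[of "2 + 2 * B^2"] by (simp add: add_pos_nonneg)
qed

lemma limit_of_close_limits:
  fixes LL :: "nat \<Rightarrow> real"
  assumes close: "\<And>k j. \<bar>LL k - LL j\<bar> \<le> 1 / Suc k + 1 / Suc j"
  obtains L where "\<And>k. \<bar>LL k - L\<bar> \<le> 1 / Suc k"
proof -
  have "Cauchy LL"
  proof (rule metric_CauchyI)
    fix e :: real assume e: "e > 0"
    obtain M :: nat where M: "2 / e < M" using reals_Archimedean2 by blast
    have "2 / Suc M < e" using M e by (simp add: field_simps)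
    show "\<exists>M. \<forall>m\<ge>M. \<forall>n\<ge>M. dist (LL m) (LL n) < e"
    proof (intro exI allI impI)
      fix k j assume "k \<ge> M" "j \<ge> M"
      then have "1 / real (Suc k) \<le> 1 / Suc M" "1 / real (Suc j) \<le> 1 / Suc M"
        by (auto intro!: divide_left_mono)
      then show "dist (LL k) (LL j) < e" using close[of k j] \<open>2 / Suc M < e\<close>
        by (simp add: dist_real_def)
    qed
  qed
  then obtain L where L: "LL \<longlonglongrightarrow> L" by (auto simp: Cauchy_convergent_iff convergent_def)
  have "\<bar>LL k - L\<bar> \<le> 1 / Suc k" for k
  proof (rule tendsto_upperbound)
    have "(\<lambda>j. 1 / real (Suc j)) \<longlonglongrightarrow> 0"
      using LIMSEQ_inverse_real_of_nat by (simp add: inverse_eq_divide)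
    then have "((\<lambda>j. \<bar>LL k - LL j\<bar> - 1 / Suc j) \<longlongrightarrow> \<bar>LL k - L\<bar> - 0) sequentially"
      by (intro tendsto_intros L)
    then show "((\<lambda>j. \<bar>LL k - LL j\<bar> - 1 / Suc j) \<longlongrightarrow> \<bar>LL k - L\<bar>) sequentially" by simp
    show "\<forall>\<^sub>F j in sequentially. \<bar>LL k - LL j\<bar> - 1 / Suc j \<le> 1 / Suc k"
      using close[of k] by (intro always_eventually allI) (smt (verit))
  qed simp
  then show ?thesis using that by blast
qed

lemma tendsto_exists_of_approx:
  fixes m :: "real \<Rightarrow> real"
  assumes approx: "\<And>\<epsilon>. \<epsilon> > 0 \<Longrightarrow> \<exists>q L. (q \<longlongrightarrow> L) at_top \<and> (\<forall>\<^sub>F Y in at_top. \<bar>m Y - q Y\<bar> \<le> \<epsilon>)"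
  shows "\<exists>L. (m \<longlongrightarrow> L) at_top"
proof -
  obtain Q LL where Qt: "\<And>k. (Q k \<longlongrightarrow> LL k) at_top"
    and Qe: "\<And>k. \<forall>\<^sub>F Y in at_top. \<bar>m Y - Q k Y\<bar> \<le> 1 / Suc k"
    using approx[of "1 / Suc _"] by (metis of_nat_0_less_iff zero_less_Suc zero_less_divide_1_iff)
  have "\<bar>LL k - LL j\<bar> \<le> 1 / Suc k + 1 / Suc j" for k j
  proof (rule tendsto_upperbound)
    show "((\<lambda>Y. \<bar>Q k Y - Q j Y\<bar>) \<longlongrightarrow> \<bar>LL k - LL j\<bar>) at_top"
      by (intro tendsto_intros Qt)
    show "\<forall>\<^sub>F Y in at_top. \<bar>Q k Y - Q j Y\<bar> \<le> 1 / Suc k + 1 / Suc j"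
      using Qe[of k] Qe[of j] by eventually_elim linarith
  qed simp
  then obtain L where L: "\<And>k. \<bar>LL k - L\<bar> \<le> 1 / Suc k"
    using limit_of_close_limits by blast
  have "(m \<longlongrightarrow> L) at_top"
  proof (rule tendstoI)
    fix e :: real assume e: "e > 0"
    obtain k :: nat where k: "3 / e < k" using reals_Archimedean2 by blast
    have ke: "3 / Suc k < e" using k e by (simp add: field_simps)
    have "\<forall>\<^sub>F Y in at_top. dist (Q k Y) (LL k) < 1 / Suc k"
      using Qt[of k] by (rule tendstoD) simp
    with Qe[of k] show "\<forall>\<^sub>F Y in at_top. dist (m Y) L < e"
    proof eventually_elim
      case (elim Y)
      have "\<bar>m Y - L\<bar> \<le> \<bar>m Y - Q k Y\<bar> + \<bar>Q k Y - LL k\<bar> + \<bar>LL k - L\<bar>" by linarith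
      also have "\<dots> < 3 / Suc k"
        using elim L[of k] by (simp add: dist_real_def)
      finally show ?case using ke by (simp add: dist_real_def)
    qed
  qed
  then show ?thesis ..
qed

text \<open>A bounded continuous \<open>f\<close> is uniformly continuous on compacts; outside \<open>[-R, R]\<close> or for
  \<open>|u - v| \<ge> \<delta>\<close> the trivial bound \<open>2 B\<close> is absorbed by the quadratic terms.\<close>

lemma bounded_continuous_diff_le_radius:
  fixes f :: "real \<Rightarrow> real"
  assumes cont: "continuous_on UNIV f" and Bf: "\<And>x. \<bar>f x\<bar> \<le> Bf" and e: "e > 0" and R: "R > 0"
  obtains \<delta> where "\<delta> > 0" "\<And>u v. \<bar>f u - f v\<bar> \<le> e + (2*Bf/\<delta>^2)*(u-v)^2 + (2*Bf/R^2)*u^2"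
proof -
  define S where "S = {-(R+1)..R+1}"
  have "uniformly_continuous_on S f"
    by (rule compact_uniformly_continuous) (use cont continuous_on_subset in \<open>auto simp: S_def\<close>)
  then obtain d where d: "d > 0" and dd: "\<And>x x'. x \<in> S \<Longrightarrow> x' \<in> S \<Longrightarrow> dist x' x < d \<Longrightarrow> dist (f x') (f x) < e"
    unfolding uniformly_continuous_on_def using e by metis
  define \<delta> where "\<delta> = min d 1"
  have \<delta>: "\<delta> > 0" "\<delta> \<le> d" "\<delta> \<le> 1" using d by (auto simp: \<delta>_def)
  have Bf0: "0 \<le> Bf" using Bf[of 0] by linarith
  have "\<bar>f u - f v\<bar> \<le> e + (2*Bf/\<delta>^2)*(u-v)^2 + (2*Bf/R^2)*u^2" for u v
  proof -
    have t1: "0 \<le> (2*Bf/\<delta>^2)*(u-v)^2" and t2: "0 \<le> (2*Bf/R^2)*u^2" using Bf0 by auto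
    have all: "\<bar>f u - f v\<bar> \<le> 2*Bf" using Bf[of u] Bf[of v] by linarith
    consider "\<bar>u\<bar> \<le> R" "\<bar>u - v\<bar> < \<delta>" | "\<bar>u\<bar> > R" | "\<bar>u - v\<bar> \<ge> \<delta>" by linarith
    then show ?thesis
    proof cases
      case 1
      then have "u \<in> S" "v \<in> S" "dist u v < d" using \<delta> by (auto simp: S_def dist_real_def)
      then have "dist (f u) (f v) < e" using dd by blast
      then show ?thesis using t1 t2 by (simp add: dist_real_def)
    next
      case 2
      then have "R^2 \<le> u^2" using R by (metis abs_of_pos less_imp_le power2_abs power_mono)
      then have "2*Bf \<le> (2*Bf/R^2)*u^2" using R Bf0 by (simp add: field_simps mult_left_mono)
      then show ?thesis using all t1 e by linarith
    next
      case 3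
      then have "\<delta>^2 \<le> (u-v)^2" using \<delta> by (metis less_imp_le power2_abs power_mono)
      then have "2*Bf \<le> (2*Bf/\<delta>^2)*(u-v)^2" using \<delta> Bf0 by (simp add: field_simps mult_left_mono)
      then show ?thesis using all t2 e by linarith
    qed
  qed
  then show ?thesis using that \<delta> by blast
qed

lemma bounded_continuous_diff_le:
  fixes f :: "real \<Rightarrow> real"
  assumes f: "continuous_on UNIV f" "bounded (range f)" and e: "e > 0" and C: "0 < C"
  obtains K1 K2 where "0 \<le> K1" "0 \<le> K2" "K2 * C \<le> e" "\<And>u v. \<bar>f u - f v\<bar> \<le> e + K1*(u-v)^2 + K2*u^2"
proof -
  obtain Bf where Bf: "\<And>x. \<bar>f x\<bar> \<le> Bf" using f(2) by (auto simp: bounded_iff)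
  have Bf0: "0 \<le> Bf" using Bf[of 0] by linarith
  define R where "R = 2 * Bf * C / e + 1"
  have R: "R \<ge> 1" using Bf0 C e by (simp add: R_def)
  obtain \<delta> where "\<delta> > 0" and modulus: "\<And>u v. \<bar>f u - f v\<bar> \<le> e + (2*Bf/\<delta>^2)*(u-v)^2 + (2*Bf/R^2)*u^2"
    using bounded_continuous_diff_le_radius[OF f(1) Bf e, of R] R by auto
  have "R \<le> R^2" using R by (simp add: power2_eq_square)
  then have "2 * Bf / R^2 * C \<le> 2 * Bf * C / R"
    using R Bf0 C by (simp add: divide_left_mono mult_pos_pos)
  also have "\<dots> \<le> e"
    using R e by (simp add: R_def field_simps)
  finally show ?thesis using that[OF _ _ _ modulus] Bf0 by simp
qed

lemma mean_abs_set_integral_le: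
  fixes g u v :: "real \<Rightarrow> real"
  assumes g: "set_integrable lborel {0..Y} g" and Y: "0 < Y"
    and [measurable]: "u \<in> borel_measurable borel" "v \<in> borel_measurable borel"
    and abc: "0 \<le> a" "0 \<le> b" "0 \<le> c"
    and bound: "\<And>y. \<bar>g y\<bar> \<le> a + b * (u y)^2 + c * (v y)^2"
  shows "ennreal \<bar>(1/Y) * (LINT y:{0..Y}|lborel. g y)\<bar> \<le>
    ennreal a + ennreal b * mean_square u Y + ennreal c * mean_square v Y"
proof -
  have "ennreal \<bar>LINT y:{0..Y}|lborel. g y\<bar> \<le> (\<integral>\<^sup>+ y. ennreal (norm (indicator {0..Y} y *\<^sub>R g y)) \<partial>lborel)"
    using integral_norm_bound_ennreal[OF g[unfolded set_integrable_def]]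
    unfolding set_lebesgue_integral_def by simp
  also have "\<dots> \<le> (\<integral>\<^sup>+ y. ennreal a * indicator {0..Y} y + ennreal b * (ennreal ((u y)^2) * indicator {0..Y} y)
      + ennreal c * (ennreal ((v y)^2) * indicator {0..Y} y) \<partial>lborel)"
  proof (rule nn_integral_mono)
    fix y
    have "ennreal \<bar>g y\<bar> \<le> ennreal (a + b * (u y)^2 + c * (v y)^2)"
      by (rule ennreal_leI[OF bound])
    also have "\<dots> = ennreal a + ennreal b * ennreal ((u y)^2) + ennreal c * ennreal ((v y)^2)"
      using abc by (simp add: ennreal_plus[symmetric] ennreal_mult[symmetric] del: ennreal_plus)
    finally show "ennreal (norm (indicator {0..Y} y *\<^sub>R g y)) \<le> ennreal a * indicator {0..Y} y +
        ennreal b * (ennreal ((u y)^2) * indicator {0..Y} y) + ennreal c * (ennreal ((v y)^2) * indicator {0..Y} y)"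
      by (cases "y \<in> {0..Y}") auto
  qed
  also have "\<dots> = ennreal a * ennreal Y + ennreal b * (\<integral>\<^sup>+ y\<in>{0..Y}. ennreal ((u y)^2) \<partial>lborel)
      + ennreal c * (\<integral>\<^sup>+ y\<in>{0..Y}. ennreal ((v y)^2) \<partial>lborel)"
    using Y by (simp add: nn_integral_add nn_integral_cmult nn_integral_cmult_indicator emeasure_lborel_Icc)
  finally have I: "ennreal \<bar>LINT y:{0..Y}|lborel. g y\<bar> \<le> \<dots>" .
  have "ennreal \<bar>(1/Y) * (LINT y:{0..Y}|lborel. g y)\<bar> = ennreal (1/Y) * ennreal \<bar>LINT y:{0..Y}|lborel. g y\<bar>"
    using Y by (simp add: abs_mult ennreal_mult[symmetric] del: ennreal_mult)
  also have "\<dots> \<le> ennreal (1/Y) * (ennreal a * ennreal Y + ennreal b * (\<integral>\<^sup>+ y\<in>{0..Y}. ennreal ((u y)^2) \<partial>lborel)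
      + ennreal c * (\<integral>\<^sup>+ y\<in>{0..Y}. ennreal ((v y)^2) \<partial>lborel))"
    by (intro mult_left_mono I) simp
  also have "\<dots> = ennreal a + ennreal b * mean_square u Y + ennreal c * mean_square v Y"
    using Y unfolding mean_square_def
    by (simp add: distrib_left mult.left_commute ennreal_mult[symmetric] del: ennreal_mult)
  finally show ?thesis .
qed

lemma B2_mean_tendsto:
  fixes \<phi> f :: "real \<Rightarrow> real"
  assumes \<phi> [measurable]: "\<phi> \<in> borel_measurable borel" and B2: "B2_almost_periodic \<phi>"
    and f: "continuous_on UNIV f" "bounded (range f)"
  shows "\<exists>L. ((\<lambda>Y. (1/Y) * (LINT y:{0..Y}|lborel. f (\<phi> y))) \<longlongrightarrow> L) at_top"
proof (rule tendsto_exists_of_approx)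
  have [measurable]: "f \<in> borel_measurable borel" by (rule borel_measurable_continuous_onI[OF f(1)])
  obtain Bf where Bf: "\<And>x. \<bar>f x\<bar> \<le> Bf" using f(2) by (auto simp: bounded_iff)
  obtain C where C: "0 < C" and ms_\<phi>: "\<forall>\<^sub>F Y in at_top. mean_square \<phi> Y \<le> ennreal C"
    using B2_mean_square_bounded[OF \<phi> B2] by auto
  fix \<epsilon> :: real assume \<epsilon>: "\<epsilon> > 0"
  obtain K1 K2 where K1: "0 \<le> K1" and K2: "0 \<le> K2" "K2 * C \<le> \<epsilon>/4"
    and modulus: "\<And>u v. \<bar>f u - f v\<bar> \<le> \<epsilon>/4 + K1*(u-v)^2 + K2*u^2"
    using bounded_continuous_diff_le[OF f, of "\<epsilon>/4" C] \<epsilon> C by auto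
  define \<epsilon>2 where "\<epsilon>2 = sqrt (\<epsilon> / (4 * (K1 + 1)))"
  have \<epsilon>2: "\<epsilon>2 > 0" "K1 * \<epsilon>2^2 \<le> \<epsilon>/4"
  proof -
    show "\<epsilon>2 > 0" using \<epsilon> K1 by (simp add: \<epsilon>2_def)
    have "K1 * \<epsilon>2^2 = (\<epsilon>/4) * (K1/(K1+1))" using \<epsilon> K1 by (simp add: \<epsilon>2_def field_simps)
    also have "\<dots> \<le> (\<epsilon>/4) * 1" using \<epsilon> K1 by (intro mult_left_mono) auto
    finally show "K1 * \<epsilon>2^2 \<le> \<epsilon>/4" by simp
  qed
  obtain p where p: "real_trig_poly p" and ms_diff: "\<forall>\<^sub>F Y in at_top. mean_square (\<lambda>y. \<phi> y - p y) Y < ennreal (\<epsilon>2^2)"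
    using B2_almost_periodicE[OF B2 \<epsilon>2(1)] by blast
  obtain Bp where Bp: "\<And>y. \<bar>p y\<bar> \<le> Bp" using real_trig_poly_bounded[OF p] by blast
  have [measurable]: "p \<in> borel_measurable borel"
    using continuous_on_real_trig_poly[OF p] by (rule borel_measurable_continuous_onI)
  obtain h where h: "real_polynomial_function h" and fh: "\<And>x. x \<in> {-Bp..Bp} \<Longrightarrow> \<bar>f x - h x\<bar> < \<epsilon>/4"
    using Stone_Weierstrass_real_polynomial_function[of "{-Bp..Bp}" f "\<epsilon>/4"] f(1) \<epsilon>
      continuous_on_subset by (metis compact_Icc divide_pos_pos subset_UNIV zero_less_numeral)
  have hp: "real_trig_poly (\<lambda>y. h (p y))" by (rule real_trig_poly_polynomial_function[OF h p])
  have [measurable]: "(\<lambda>y. h (p y)) \<in> borel_measurable borel"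
    using continuous_on_real_trig_poly[OF hp] by (rule borel_measurable_continuous_onI)
  obtain L where L: "((\<lambda>Y. (1/Y) * integral {0..Y} (\<lambda>y. h (p y))) \<longlongrightarrow> L) at_top"
    using real_trig_poly_mean[OF hp] by blast
  have pointwise: "\<bar>f (\<phi> y) - h (p y)\<bar> \<le> \<epsilon>/2 + K1 * (\<phi> y - p y)^2 + K2 * (\<phi> y)^2" for y
  proof -
    have "\<bar>f (\<phi> y) - h (p y)\<bar> \<le> \<bar>f (\<phi> y) - f (p y)\<bar> + \<bar>f (p y) - h (p y)\<bar>" by linarith
    also have "\<dots> \<le> (\<epsilon>/4 + K1 * (\<phi> y - p y)^2 + K2 * (\<phi> y)^2) + \<epsilon>/4"
      using modulus[of "\<phi> y" "p y"] fh[of "p y"] Bp[of y] by (intro add_mono) (auto simp: abs_le_iff)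
    finally show ?thesis by simp
  qed
  have "\<forall>\<^sub>F Y in at_top. \<bar>(1/Y) * (LINT y:{0..Y}|lborel. f (\<phi> y)) - (1/Y) * integral {0..Y} (\<lambda>y. h (p y))\<bar> \<le> \<epsilon>"
    using ms_diff ms_\<phi> eventually_gt_at_top[of "0::real"]
  proof eventually_elim
    case (elim Y)
    have i1: "set_integrable lborel {0..Y} (\<lambda>y. f (\<phi> y))"
      unfolding set_integrable_def
      by (rule integrableI_bounded_set_indicator[where B=Bf]) (auto simp: Bf emeasure_lborel_Icc_eq)
    have i2: "set_integrable lborel {0..Y} (\<lambda>y. h (p y))"
      by (rule borel_integrable_atLeastAtMost') (intro continuous_on_real_trig_poly hp)
    have "(1/Y) * (LINT y:{0..Y}|lborel. f (\<phi> y)) - (1/Y) * integral {0..Y} (\<lambda>y. h (p y)) =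
        (1/Y) * (LINT y:{0..Y}|lborel. f (\<phi> y) - h (p y))"
    proof -
      have "(LINT y:{0..Y}|lborel. f (\<phi> y)) - integral {0..Y} (\<lambda>y. h (p y)) =
          (LINT y:{0..Y}|lborel. f (\<phi> y) - h (p y))"
        using set_borel_integral_eq_integral(2)[OF i2] set_integral_diff(2)[OF i1 i2] by simp
      then show ?thesis by (metis right_diff_distrib)
    qed
    moreover have "ennreal \<bar>(1/Y) * (LINT y:{0..Y}|lborel. f (\<phi> y) - h (p y))\<bar> \<le> ennreal \<epsilon>"
    proof -
      have "ennreal \<bar>(1/Y) * (LINT y:{0..Y}|lborel. f (\<phi> y) - h (p y))\<bar> \<le>
          ennreal (\<epsilon>/2) + ennreal K1 * mean_square (\<lambda>y. \<phi> y - p y) Y + ennreal K2 * mean_square \<phi> Y"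
        by (rule mean_abs_set_integral_le[OF set_integral_diff(1)[OF i1 i2] elim(3)])
          (use \<epsilon> K1 K2 pointwise in auto)
      also have "\<dots> \<le> ennreal (\<epsilon>/2) + ennreal K1 * ennreal (\<epsilon>2^2) + ennreal K2 * ennreal C"
        using elim(1,2) by (intro add_mono mult_left_mono order.refl) auto
      also have "\<dots> = ennreal (\<epsilon>/2 + K1 * \<epsilon>2^2 + K2 * C)"
        using \<epsilon> K1 K2 C by (simp add: ennreal_plus[symmetric] ennreal_mult[symmetric] del: ennreal_plus)
      also have "\<dots> \<le> ennreal \<epsilon>" using \<epsilon>2 K2 by (intro ennreal_leI) linarith
      finally show ?thesis .
    qed
    ultimately show ?case using \<epsilon> by (simp add: ennreal_le_iff)
  qed
  then show "\<exists>q L. (q \<longlongrightarrow> L) at_top \<and>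
      (\<forall>\<^sub>F Y in at_top. \<bar>(1/Y) * (LINT y:{0..Y}|lborel. f (\<phi> y)) - q Y\<bar> \<le> \<epsilon>)"
    using L by blast
qed

section \<open>The limiting distribution\<close>

definition empirical_distr :: "(real \<Rightarrow> real) \<Rightarrow> real \<Rightarrow> real measure" where
  "empirical_distr \<phi> Y = distr (density lborel (\<lambda>y. ennreal (indicator {0..Y} y / Y))) borel \<phi>"

lemma real_distribution_empirical_distr:
  assumes [measurable]: "\<phi> \<in> borel_measurable borel" and Y: "0 < Y"
  shows "real_distribution (empirical_distr \<phi> Y)"
proof -
  have "prob_space (density lborel (\<lambda>y. ennreal (indicator {0..Y} y / Y)))"
  proof (rule prob_spaceI)
    have "(\<integral>\<^sup>+ y. ennreal (indicator {0..Y} y / Y) \<partial>lborel) = (\<integral>\<^sup>+ y. ennreal (1 / Y) * indicator {0..Y} y \<partial>lborel)"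
      by (intro nn_integral_cong) (auto simp: indicator_def)
    also have "\<dots> = 1"
      using Y by (simp add: nn_integral_cmult_indicator emeasure_lborel_Icc ennreal_mult[symmetric] del: ennreal_mult)
    finally show "emeasure (density lborel (\<lambda>y. ennreal (indicator {0..Y} y / Y)))
        (space (density lborel (\<lambda>y. ennreal (indicator {0..Y} y / Y)))) = 1"
      by (simp add: emeasure_density)
  qed
  then have "prob_space (empirical_distr \<phi> Y)"
    unfolding empirical_distr_def by (intro prob_space.prob_space_distr) simp_all
  then show ?thesis
    unfolding real_distribution_def real_distribution_axioms_def by (simp add: empirical_distr_def)
qed

lemma integral_empirical_distr:
  assumes [measurable]: "\<phi> \<in> borel_measurable borel" "f \<in> borel_measurable borel" and Y: "0 < Y"
  shows "integral\<^sup>L (empirical_distr \<phi> Y) f = (1/Y) * (LINT y:{0..Y}|lborel. f (\<phi> y))"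
proof -
  have "integral\<^sup>L (empirical_distr \<phi> Y) f =
      integral\<^sup>L (density lborel (\<lambda>y. ennreal (indicator {0..Y} y / Y))) (\<lambda>y. f (\<phi> y))"
    unfolding empirical_distr_def by (rule integral_distr) simp_all
  also have "\<dots> = integral\<^sup>L lborel (\<lambda>y. (indicator {0..Y} y / Y) *\<^sub>R f (\<phi> y))"
    by (rule integral_density) (use Y in auto)
  also have "\<dots> = (1/Y) * (LINT y:{0..Y}|lborel. f (\<phi> y))"
    by (simp add: set_lebesgue_integral_def)
  finally show ?thesis .
qed

lemma emeasure_empirical_distr_outside_le:
  assumes \<phi> [measurable]: "\<phi> \<in> borel_measurable borel" and Y: "0 < Y" and R: "0 < R"
  shows "emeasure (empirical_distr \<phi> Y) (- {-R<..R}) \<le> ennreal (1 / R^2) * mean_square \<phi> Y"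
proof -
  have "emeasure (empirical_distr \<phi> Y) (- {-R<..R}) =
      (\<integral>\<^sup>+ y. ennreal (indicator {0..Y} y / Y) * indicator (\<phi> -` (- {-R<..R})) y \<partial>lborel)"
    unfolding empirical_distr_def
    by (simp add: emeasure_distr emeasure_density measurable_sets_borel[OF \<phi>])
  also have "\<dots> \<le> (\<integral>\<^sup>+ y. ennreal (1 / R^2) * (ennreal (1/Y) * (ennreal ((\<phi> y)^2) * indicator {0..Y} y)) \<partial>lborel)"
  proof (rule nn_integral_mono)
    fix y
    show "ennreal (indicator {0..Y} y / Y) * indicator (\<phi> -` (- {-R<..R})) y \<le>
        ennreal (1 / R^2) * (ennreal (1/Y) * (ennreal ((\<phi> y)^2) * indicator {0..Y} y))"
    proof (cases "y \<in> {0..Y} \<and> \<phi> y \<notin> {-R<..R}")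
      case True
      then have "R \<le> \<bar>\<phi> y\<bar>" by auto
      then have "R^2 \<le> (\<phi> y)^2" using R by (metis abs_of_pos power2_abs power_mono less_imp_le)
      then have "1 / Y \<le> 1 / R^2 * (1/Y * (\<phi> y)^2)"
        using Y R by (simp add: field_simps)
      then show ?thesis
        using True Y R by (simp add: ennreal_mult[symmetric] del: ennreal_mult)
    qed auto
  qed
  also have "\<dots> = ennreal (1 / R^2) * mean_square \<phi> Y"
    unfolding mean_square_def by (simp add: nn_integral_cmult)
  finally show ?thesis .
qed

lemma tight_empirical_distr:
  assumes \<phi> [measurable]: "\<phi> \<in> borel_measurable borel"
    and Y: "\<And>n. 0 < Y n" and ms: "\<And>n. mean_square \<phi> (Y n) \<le> ennreal C" and C: "0 < C"
  shows "tight (\<lambda>n. empirical_distr \<phi> (Y n))"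
  unfolding tight_def
proof (intro conjI allI impI)
  show "real_distribution (empirical_distr \<phi> (Y n))" for n
    by (rule real_distribution_empirical_distr[OF \<phi> Y])
  fix \<epsilon> :: real assume \<epsilon>: "\<epsilon> > 0"
  define R where "R = C / \<epsilon> + 1"
  have R: "R \<ge> 1" using C \<epsilon> by (simp add: R_def)
  have RC: "C / R^2 < \<epsilon>"
  proof -
    have "C / R^2 \<le> C / R" using R C by (intro divide_left_mono) (auto simp: power2_eq_square)
    also have "\<dots> < \<epsilon>" using R \<epsilon> C by (simp add: R_def field_simps)
    finally show ?thesis .
  qed
  show "\<exists>a b. a < b \<and> (\<forall>n. 1 - \<epsilon> < measure (empirical_distr \<phi> (Y n)) {a<..b})"
  proof (intro exI conjI allI)
    show "-R < R" using R by simp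
    fix n
    interpret real_distribution "empirical_distr \<phi> (Y n)"
      by (rule real_distribution_empirical_distr[OF \<phi> Y])
    have "emeasure (empirical_distr \<phi> (Y n)) (- {-R<..R}) \<le> ennreal (1 / R^2) * mean_square \<phi> (Y n)"
      using R by (intro emeasure_empirical_distr_outside_le Y) auto
    also have "\<dots> \<le> ennreal (1 / R^2) * ennreal C"
      using ms by (rule mult_left_mono) simp
    finally have "measure (empirical_distr \<phi> (Y n)) (- {-R<..R}) \<le> C / R^2"
      using C by (simp add: emeasure_eq_measure ennreal_mult[symmetric] del: ennreal_mult)
    moreover have "measure (empirical_distr \<phi> (Y n)) {-R<..R} = 1 - measure (empirical_distr \<phi> (Y n)) (- {-R<..R})"
      using prob_compl[of "{-R<..R}"] by (simp add: Compl_eq_Diff_UNIV)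
    ultimately show "1 - \<epsilon> < measure (empirical_distr \<phi> (Y n)) {-R<..R}" using RC by linarith
  qed
qed

lemma B2_has_limiting_distribution:
  fixes \<phi> :: "real \<Rightarrow> real"
  assumes \<phi> [measurable]: "\<phi> \<in> borel_measurable borel" and B2: "B2_almost_periodic \<phi>"
  shows "has_limiting_distribution \<phi>"
proof -
  obtain C where C: "0 < C" and "\<forall>\<^sub>F Y in at_top. mean_square \<phi> Y \<le> ennreal C"
    using B2_mean_square_bounded[OF \<phi> B2] by auto
  then obtain Y0 where Y0: "1 \<le> Y0" and ms: "\<And>Y. Y \<ge> Y0 \<Longrightarrow> mean_square \<phi> Y \<le> ennreal C"
    by (metis (no_types, lifting) eventually_at_top_linorder max.bounded_iff nle_le)
  define Yn where "Yn n = real n + Y0" for n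
  have Yn: "0 < Yn n" "Y0 \<le> Yn n" for n using Y0 by (auto simp: Yn_def)
  define \<nu> where "\<nu> n = empirical_distr \<phi> (Yn n)" for n
  have \<nu>: "real_distribution (\<nu> n)" for n
    unfolding \<nu>_def by (rule real_distribution_empirical_distr[OF _ Yn(1)]) simp
  have "tight \<nu>"
    unfolding \<nu>_def using Yn(1) ms[OF Yn(2)] C by (rule tight_empirical_distr[OF \<phi>])
  then obtain s M where s: "strict_mono s" and M: "real_distribution M" and wc: "weak_conv_m (\<nu> \<circ> s) M"
    using tight_imp_convergent_subsubsequence[of \<nu> id] by (auto simp: strict_mono_def)
  interpret M: real_distribution M by (rule M)
  have "((\<lambda>Y. (1/Y) * (LINT y:{0..Y}|lborel. f (\<phi> y))) \<longlongrightarrow> (\<integral>x. f x \<partial>M)) at_top"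
    if f: "continuous_on UNIV f" "bounded (range f)" for f :: "real \<Rightarrow> real"
  proof -
    have [measurable]: "f \<in> borel_measurable borel" using f by (intro borel_measurable_continuous_onI)
    obtain B where B: "\<And>x. norm (f x) \<le> B" using f by (auto simp: bounded_iff)
    obtain L where L: "((\<lambda>Y. (1/Y) * (LINT y:{0..Y}|lborel. f (\<phi> y))) \<longlongrightarrow> L) at_top"
      using B2_mean_tendsto[OF \<phi> B2 f] by blast
    have "(\<lambda>n. integral\<^sup>L ((\<nu> \<circ> s) n) f) \<longlonglongrightarrow> integral\<^sup>L M f"
      using \<nu> f B by (intro weak_conv_imp_integral_bdd_continuous_conv[OF _ M wc])
        (auto simp: continuous_on_eq_continuous_at)
    moreover have "filterlim (\<lambda>n. Yn (s n)) at_top sequentially"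
      using seq_suble[OF s] Y0 unfolding Yn_def
      by (intro filterlim_at_top_mono[OF filterlim_real_sequentially] always_eventually allI)
        (smt (verit) of_nat_le_iff)
    then have "(\<lambda>n. integral\<^sup>L ((\<nu> \<circ> s) n) f) \<longlonglongrightarrow> L"
      using filterlim_compose[OF L] by (simp add: \<nu>_def integral_empirical_distr Yn(1))
    ultimately have "L = integral\<^sup>L M f" using LIMSEQ_unique by blast
    then show ?thesis using L by simp
  qed
  then show ?thesis
    unfolding has_limiting_distribution_def using M.prob_space_axioms by (intro exI[of _ M]) auto
qed

lemma B2_almost_periodic_cong:
  assumes "\<And>y. 0 \<le> y \<Longrightarrow> \<phi> y = \<psi> y" "B2_almost_periodic \<phi>"
  shows "B2_almost_periodic \<psi>"
proof -
  have "(\<integral>\<^sup>+ y\<in>{0..Y}. ennreal ((cmod (complex_of_real (\<phi> y) - P y))^2) \<partial>lborel) =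
        (\<integral>\<^sup>+ y\<in>{0..Y}. ennreal ((cmod (complex_of_real (\<psi> y) - P y))^2) \<partial>lborel)" for Y P
    by (rule set_nn_integral_cong) (auto simp: assms(1))
  then show ?thesis using assms(2) unfolding B2_almost_periodic_def by simp
qed

lemma has_limiting_distribution_cong:
  assumes "\<And>y. 0 \<le> y \<Longrightarrow> \<phi> y = \<psi> y" "has_limiting_distribution \<phi>"
  shows "has_limiting_distribution \<psi>"
proof -
  have "(LINT y:{0..Y}|lborel. f (\<phi> y)) = (LINT y:{0..Y}|lborel. f (\<psi> y))" for Y and f :: "real \<Rightarrow> real"
    by (rule set_lebesgue_integral_cong) (auto simp: assms(1))
  then show ?thesis using assms(2) unfolding has_limiting_distribution_def by simp
qed

lemma summable_log_weighted:
  fixes lam :: "nat \<Rightarrow> real" and r :: "nat \<Rightarrow> complex"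
  assumes pos: "\<And>n. lam n > 0" and lim: "filterlim lam at_top sequentially"
    and cases:
      "(\<exists>\<beta>>1/2. (\<exists>M>0. \<forall>\<^sub>F n in sequentially. cmod (r n) \<le> M * \<bar>lam n powr (-\<beta>)\<bar>) \<and>
          (\<exists>M>0. \<forall>\<^sub>F T in at_top. real (card {n. T < lam n \<and> lam n \<le> T + 1}) \<le> M * \<bar>ln T\<bar>))
       \<or>
       (\<exists>\<theta>. 0 \<le> \<theta> \<and> \<theta> < 3 - sqrt 3 \<and>
          (\<exists>M>0. \<forall>\<^sub>F T in at_top. real (card {n. T < lam n \<and> lam n \<le> T + 1}) \<le> M * \<bar>ln T\<bar>) \<and>
          (\<exists>M>0. \<forall>\<^sub>F T in at_top.
             \<bar>\<Sum>n\<in>{n. lam n \<le> T}. (lam n)^2 * (cmod (r n))^2\<bar> \<le> M * \<bar>T powr \<theta>\<bar>))"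
  shows "summable (\<lambda>n. (cmod (r n))^2 * (1 + ln (1 + lam n)))"
  using cases
proof (elim disjE)
  assume "\<exists>\<beta>>1/2. (\<exists>M>0. \<forall>\<^sub>F n in sequentially. cmod (r n) \<le> M * \<bar>lam n powr (-\<beta>)\<bar>) \<and>
      (\<exists>M>0. \<forall>\<^sub>F T in at_top. real (card {n. T < lam n \<and> lam n \<le> T + 1}) \<le> M * \<bar>ln T\<bar>)"
  then show ?thesis using summable_log_weighted_of_decay[OF pos lim] by blast
next
  assume "\<exists>\<theta>. 0 \<le> \<theta> \<and> \<theta> < 3 - sqrt 3 \<and>
      (\<exists>M>0. \<forall>\<^sub>F T in at_top. real (card {n. T < lam n \<and> lam n \<le> T + 1}) \<le> M * \<bar>ln T\<bar>) \<and>
      (\<exists>M>0. \<forall>\<^sub>F T in at_top.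
         \<bar>\<Sum>n\<in>{n. lam n \<le> T}. (lam n)^2 * (cmod (r n))^2\<bar> \<le> M * \<bar>T powr \<theta>\<bar>)"
  then obtain \<theta> where \<theta>: "0 \<le> \<theta>" "\<theta> < 3 - sqrt 3" and moment:
      "\<exists>M>0. \<forall>\<^sub>F T in at_top. \<bar>\<Sum>n\<in>{n. lam n \<le> T}. (lam n)^2 * (cmod (r n))^2\<bar> \<le> M * \<bar>T powr \<theta>\<bar>"
    by blast
  have "\<theta> < 2" using \<theta> real_sqrt_gt_1_iff[of 3] by linarith
  then show ?thesis by (rule summable_log_weighted_of_moment[OF pos lim \<theta>(1) _ moment])
qed

text \<open>The statement only constrains \<open>\<phi>\<close> on \<open>[0, \<infinity>)\<close>; we work with its extension by zero, which is
  Borel measurable on the whole line.\<close>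

theorem corollary1p3:
  fixes \<phi> :: "real \<Rightarrow> real" and y0 c X0 :: real
    and lam :: "nat \<Rightarrow> real" and r :: "nat \<Rightarrow> complex"
    and E :: "real \<Rightarrow> real \<Rightarrow> real"
  assumes meas: "set_borel_measurable lborel {0..} \<phi>"
    and y0: "y0 \<ge> 0"
    and sqint: "set_integrable lborel {0..y0} (\<lambda>y. (\<phi> y)^2)"
    and lam_mono: "mono lam"
    and lam_pos: "\<And>n. lam n > 0"
    and lam_lim: "filterlim lam at_top sequentially"
    and X0: "X0 > 0"
    and expansion: "\<And>y X. y \<ge> y0 \<Longrightarrow> X \<ge> X0 \<Longrightarrow>
        \<phi> y = c + Re (\<Sum>n\<in>{n. lam n \<le> X}. r n * exp (\<i> * complex_of_real (lam n * y))) + E y X"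
    and err: "((\<lambda>Y. ennreal (1 / Y) *
          (\<integral>\<^sup>+ y\<in>{y0..Y}. ennreal ((E y (exp Y))^2) \<partial>lborel)) \<longlongrightarrow> 0) at_top"
    and cases:
      "(\<exists>\<beta>>1/2. (\<exists>M>0. \<forall>\<^sub>F n in sequentially. cmod (r n) \<le> M * \<bar>lam n powr (-\<beta>)\<bar>) \<and>
          (\<exists>M>0. \<forall>\<^sub>F T in at_top. real (card {n. T < lam n \<and> lam n \<le> T + 1}) \<le> M * \<bar>ln T\<bar>))
       \<or>
       (\<exists>\<theta>. 0 \<le> \<theta> \<and> \<theta> < 3 - sqrt 3 \<and>
          (\<exists>M>0. \<forall>\<^sub>F T in at_top. real (card {n. T < lam n \<and> lam n \<le> T + 1}) \<le> M * \<bar>ln T\<bar>) \<and>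
          (\<exists>M>0. \<forall>\<^sub>F T in at_top.
             \<bar>\<Sum>n\<in>{n. lam n \<le> T}. (lam n)^2 * (cmod (r n))^2\<bar> \<le> M * \<bar>T powr \<theta>\<bar>))"
  shows "B2_almost_periodic \<phi> \<and> has_limiting_distribution \<phi>"
proof -
  have "\<exists>M>0. \<forall>\<^sub>F T in at_top. real (card {n. T < lam n \<and> lam n \<le> T + 1}) \<le> M * \<bar>ln T\<bar>"
    using cases by blast
  then obtain D where D: "0 \<le> D"
    and kernel: "\<And>x F. 0 < x \<Longrightarrow> finite F \<Longrightarrow> (\<Sum>n\<in>F. 1/(1+(x - lam n)^2)) \<le> D*(1+ln(1+x))"
    using sum_frequency_kernel_le_log[OF lam_pos lam_lim] by blast
  define \<phi>0 where "\<phi>0 y = indicator {0..} y * \<phi> y" for y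
  have \<phi>0_meas: "\<phi>0 \<in> borel_measurable borel"
    using meas unfolding \<phi>0_def[abs_def] by (simp add: set_borel_measurable_def)
  have \<phi>0: "\<And>y. 0 \<le> y \<Longrightarrow> \<phi>0 y = \<phi> y" by (simp add: \<phi>0_def)
  have "B2_almost_periodic \<phi>0"
  proof (rule B2_almost_periodic_of_expansion[OF \<phi>0_meas _ lam_pos lam_lim _ err D kernel])
    show "set_integrable lborel {0..y0} (\<lambda>y. (\<phi>0 y)^2)"
      using sqint set_integrable_cong[of lborel lborel "{0..y0}" "{0..y0}" "\<lambda>y. (\<phi>0 y)^2"] by (simp add: \<phi>0)
    show "\<phi>0 y = c + Re (exp_sum {n. lam n \<le> X} r lam y) + E y X" if "y \<ge> y0" "X \<ge> X0" for y X
      using expansion[OF that] that y0 by (simp add: \<phi>0 exp_sum_def)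
    show "summable (\<lambda>n. (cmod (r n))^2 * (1 + ln (1 + lam n)))"
      by (rule summable_log_weighted[OF lam_pos lam_lim cases])
  qed
  then have "has_limiting_distribution \<phi>0"
    by (rule B2_has_limiting_distribution[OF \<phi>0_meas])
  with \<open>B2_almost_periodic \<phi>0\<close> show ?thesis
    using B2_almost_periodic_cong[OF \<phi>0] has_limiting_distribution_cong[OF \<phi>0] by simp
qed

end
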